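(* Let $c\in(0,1)$. If $Y:\mathbb{R}\to\mathbb{R}$ is a function such that $|Y(x)|\le e^{-|x|}$ on $\mathbb{R}$ and $\int Y>0$, then for any $h\in H^1(\mathbb{R})$, \[ \int e^{-c|x|}h^2\le \frac{4}{c\int Y}\int Yh^2+\frac{64}{c^2\left(\int Y\right)^2}\int (h')^2. \] *)

theory Defs
  imports "HOL-Analysis.Analysis"
begin

definition test_function :: "(real \<Rightarrow> real) \<Rightarrow> bool" where
  "test_function \<phi> \<longleftrightarrow>
     (\<forall>n x. ((deriv ^^ n) \<phi>) differentiable (at x)) \<and>
     (\<exists>R. \<forall>x. \<bar>x\<bar> > R \<longrightarrow> \<phi> x = 0)"

definition H1_weak_deriv :: "(real \<Rightarrow> real) \<Rightarrow> (real \<Rightarrow> real) \<Rightarrow> bool" where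
  "H1_weak_deriv h g \<longleftrightarrow>
     h \<in> borel_measurable lborel \<and> g \<in> borel_measurable lborel \<and>
     integrable lborel (\<lambda>x. (h x)\<^sup>2) \<and> integrable lborel (\<lambda>x. (g x)\<^sup>2) \<and>
     (\<forall>\<phi>. test_function \<phi> \<longrightarrow>
        (\<integral>x. h x * deriv \<phi> x \<partial>lborel) = - (\<integral>x. g x * \<phi> x \<partial>lborel))"

end

(*
  Write E(x) = exp (-c |x|) and I = integral of Y.  By the du Bois-Reymond lemma (a locally
  integrable function with vanishing distributional derivative is a.e. constant; the test
  functions used are smoothed differences of normalised interval indicators), h agrees a.e.
  with H = primitive of h' + const, and H(y)^2 - H(x)^2 is the integral of 2 H h' over [x, y).
  Hence |H(x)^2 - H(y)^2| <= S(x) + S(y), where S(x) is the integral of 2 |H h'| between 0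
  and x.  Averaging against Y, using |Y(y)| <= exp (-|y|) <= E(y), gives
    I H(x)^2 <= integral (Y H^2) + 2 S(x) + integral (2 |H h'| E).
  Integrating against E, Fubini turns integral (E S) into (1/c) integral (2 |H h'| E), so
    I integral (E H^2) <= (2/c) integral (Y H^2) + (4/c) integral (2 |H h'| E),
  and Young's inequality 8ab/c <= (I/2) a^2 + 32 b^2 / (c^2 I) absorbs half of the left side.
*)
theory Submission
  imports Defs "HOL-Computational_Algebra.Polynomial"
begin

section \<open>Smooth functions on the real line\<close>

fun n_times_differentiable :: "nat \<Rightarrow> (real \<Rightarrow> real) \<Rightarrow> bool" where
  "n_times_differentiable 0 f = True"
| "n_times_differentiable (Suc n) f =
     (\<exists>f'. (\<forall>x. (f has_real_derivative f' x) (at x)) \<and> n_times_differentiable n f')"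

lemma n_times_differentiable_SucD: "n_times_differentiable (Suc n) f \<Longrightarrow> n_times_differentiable n f"
  by (induction n arbitrary: f) auto

lemma n_times_differentiable_deriv:
  assumes "n_times_differentiable (Suc n) f"
  shows "n_times_differentiable n (deriv f)" "(f has_real_derivative deriv f x) (at x)"
proof -
  from assms obtain f' where f': "\<forall>x. (f has_real_derivative f' x) (at x)" "n_times_differentiable n f'"
    by auto
  then have "deriv f = f'" using DERIV_imp_deriv by blast
  with f' show "n_times_differentiable n (deriv f)" "(f has_real_derivative deriv f x) (at x)"
    by auto
qed

lemma n_times_differentiable_const: "n_times_differentiable n (\<lambda>x. c)"
  by (induction n arbitrary: c) (auto intro!: exI[of _ "\<lambda>x. 0"] derivative_eq_intros)

lemma n_times_differentiable_ident: "n_times_differentiable n (\<lambda>x. x)"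
  by (cases n) (auto intro!: exI[of _ "\<lambda>x. 1"] n_times_differentiable_const)

lemma n_times_differentiable_add:
  "n_times_differentiable n f \<Longrightarrow> n_times_differentiable n g \<Longrightarrow>
    n_times_differentiable n (\<lambda>x. f x + g x)"
proof (induction n arbitrary: f g)
  case (Suc n)
  then obtain f' g' where "\<forall>x. (f has_real_derivative f' x) (at x)" "n_times_differentiable n f'"
    and "\<forall>x. (g has_real_derivative g' x) (at x)" "n_times_differentiable n g'"
    by auto
  with Suc.IH show ?case
    by (auto intro!: exI[of _ "\<lambda>x. f' x + g' x"] derivative_eq_intros)
qed simp

lemma n_times_differentiable_mult:
  "n_times_differentiable n f \<Longrightarrow> n_times_differentiable n g \<Longrightarrow>
    n_times_differentiable n (\<lambda>x. f x * g x)"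
proof (induction n arbitrary: f g)
  case (Suc n)
  then obtain f' g' where f': "\<forall>x. (f has_real_derivative f' x) (at x)" "n_times_differentiable n f'"
    and g': "\<forall>x. (g has_real_derivative g' x) (at x)" "n_times_differentiable n g'"
    by auto
  have "n_times_differentiable n f" "n_times_differentiable n g"
    using Suc.prems n_times_differentiable_SucD by blast+
  with f' g' Suc.IH have "n_times_differentiable n (\<lambda>x. f' x * g x + f x * g' x)"
    by (simp add: n_times_differentiable_add)
  with f' g' show ?case
    by (auto intro!: exI[of _ "\<lambda>x. f' x * g x + f x * g' x"] derivative_eq_intros)
qed simp

lemma n_times_differentiable_inverse:
  "n_times_differentiable n g \<Longrightarrow> (\<And>x. g x \<noteq> 0) \<Longrightarrow>
    n_times_differentiable n (\<lambda>x. inverse (g x))"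
proof (induction n arbitrary: g)
  case (Suc n)
  then obtain g' where g': "\<forall>x. (g has_real_derivative g' x) (at x)" "n_times_differentiable n g'"
    by auto
  have "n_times_differentiable n (\<lambda>x. inverse (g x))"
    using Suc n_times_differentiable_SucD by blast
  with g' have "n_times_differentiable n (\<lambda>x. - 1 * g' x * (inverse (g x) * inverse (g x)))"
    by (intro n_times_differentiable_mult n_times_differentiable_const)
  with g' Suc.prems(2) show ?case
    by (auto intro!: exI[of _ "\<lambda>x. - 1 * g' x * (inverse (g x) * inverse (g x))"]
        derivative_eq_intros simp: power2_eq_square)
qed simp

lemma n_times_differentiable_compose_affine:
  "n_times_differentiable n f \<Longrightarrow> n_times_differentiable n (\<lambda>x. f (a * x + b))"
proof (induction n arbitrary: f)
  case (Suc n)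
  then obtain f' where f': "\<forall>x. (f has_real_derivative f' x) (at x)" "n_times_differentiable n f'"
    by auto
  have "((\<lambda>x. f (a * x + b)) has_real_derivative a * f' (a * x + b)) (at x)" for x
  proof -
    have "((\<lambda>x. a * x + b) has_real_derivative a) (at x)"
      by (auto intro!: derivative_eq_intros)
    from DERIV_chain2[OF f'(1)[rule_format] this] show ?thesis by (simp add: mult.commute)
  qed
  moreover have "n_times_differentiable n (\<lambda>x. a * f' (a * x + b))"
    using f'(2) Suc.IH by (intro n_times_differentiable_mult n_times_differentiable_const)
  ultimately show ?case by (auto intro!: exI[of _ "\<lambda>x. a * f' (a * x + b)"])
qed simp

definition smooth :: "(real \<Rightarrow> real) \<Rightarrow> bool" where
  "smooth f \<longleftrightarrow> (\<forall>n. n_times_differentiable n f)"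

lemma smooth_deriv: "smooth f \<Longrightarrow> smooth (deriv f)"
  unfolding smooth_def using n_times_differentiable_deriv(1) by blast

lemma smooth_has_real_derivative: "smooth f \<Longrightarrow> (f has_real_derivative deriv f x) (at x)"
  unfolding smooth_def using n_times_differentiable_deriv(2)[of 0 f] by blast

lemma continuous_on_deriv_smooth: "smooth f \<Longrightarrow> continuous_on UNIV (deriv f)"
  using smooth_has_real_derivative[OF smooth_deriv]
  by (meson DERIV_continuous continuous_at_imp_continuous_on)

lemma borel_measurable_deriv_smooth: "smooth f \<Longrightarrow> deriv f \<in> borel_measurable borel"
  by (intro borel_measurable_continuous_onI continuous_on_deriv_smooth)

lemma smooth_const: "smooth (\<lambda>x. c)"
  by (simp add: smooth_def n_times_differentiable_const)

lemma smooth_ident: "smooth (\<lambda>x. x)"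
  by (simp add: smooth_def n_times_differentiable_ident)

lemma smooth_add: "smooth f \<Longrightarrow> smooth g \<Longrightarrow> smooth (\<lambda>x. f x + g x)"
  by (simp add: smooth_def n_times_differentiable_add)

lemma smooth_mult: "smooth f \<Longrightarrow> smooth g \<Longrightarrow> smooth (\<lambda>x. f x * g x)"
  by (simp add: smooth_def n_times_differentiable_mult)

lemma smooth_inverse: "smooth g \<Longrightarrow> (\<And>x. g x \<noteq> 0) \<Longrightarrow> smooth (\<lambda>x. inverse (g x))"
  by (simp add: smooth_def n_times_differentiable_inverse)

lemma smooth_compose_affine: "smooth f \<Longrightarrow> smooth (\<lambda>x. f (a * x + b))"
  by (simp add: smooth_def n_times_differentiable_compose_affine)

lemma smooth_diff: "smooth f \<Longrightarrow> smooth g \<Longrightarrow> smooth (\<lambda>x. f x - g x)"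
  using smooth_add[OF _ smooth_mult[OF smooth_const, of g "- 1"], of f] by simp

lemma smooth_divide: "smooth f \<Longrightarrow> smooth g \<Longrightarrow> (\<And>x. g x \<noteq> 0) \<Longrightarrow> smooth (\<lambda>x. f x / g x)"
  by (simp add: divide_inverse smooth_mult smooth_inverse)

lemma test_functionI:
  assumes "smooth f" and "\<And>x. \<bar>x\<bar> > R \<Longrightarrow> f x = 0"
  shows "test_function f"
proof -
  have "smooth f \<Longrightarrow> ((deriv ^^ n) f) differentiable (at x)" for n f x
  proof (induction n arbitrary: f)
    case 0
    then show ?case using smooth_has_real_derivative real_differentiable_def by fastforce
  next
    case (Suc n)
    then show ?case using smooth_deriv by (simp add: funpow_Suc_right del: funpow.simps)
  qed
  with assms show ?thesis unfolding test_function_def by blast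
qed

text \<open>For p = 1 this is the flat function exp (-1/x); allowing a polynomial factor makes the
  family closed under differentiation, so smoothness follows by induction.\<close>
definition exp_inverse_poly :: "real poly \<Rightarrow> real \<Rightarrow> real" where
  "exp_inverse_poly p x = (if x > 0 then poly p (inverse x) * exp (- inverse x) else 0)"

lemma tendsto_poly_times_exp_neg_at_top:
  fixes p :: "real poly"
  shows "((\<lambda>t. poly p t * exp (- t)) \<longlongrightarrow> 0) at_top"
proof -
  have "((\<lambda>t. \<Sum>i\<le>degree p. coeff p i * (t ^ i / exp t)) \<longlongrightarrow> (\<Sum>i\<le>degree p. coeff p i * 0)) at_top"
    by (intro tendsto_sum tendsto_mult tendsto_const tendsto_power_div_exp_0)
  then show ?thesis
    by (simp add: poly_altdef exp_minus divide_inverse sum_distrib_right mult.assoc)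
qed

lemma exp_inverse_poly_has_real_derivative:
  "(exp_inverse_poly p has_real_derivative exp_inverse_poly ([:0, 0, 1:] * (p - pderiv p)) x) (at x)"
proof -
  consider "x > 0" | "x < 0" | "x = 0" by linarith
  then show ?thesis
  proof cases
    case 1
    have "((\<lambda>x. poly p (inverse x) * exp (- inverse x)) has_real_derivative
        poly ([:0, 0, 1:] * (p - pderiv p)) (inverse x) * exp (- inverse x)) (at x)"
      using 1 by (auto intro!: derivative_eq_intros simp: power2_eq_square field_simps)
    then have "(exp_inverse_poly p has_real_derivative
        poly ([:0, 0, 1:] * (p - pderiv p)) (inverse x) * exp (- inverse x)) (at x)"
      by (rule has_field_derivative_transform_within_open[where S = "{0<..}"])
        (use 1 in \<open>auto simp: exp_inverse_poly_def\<close>)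
    with 1 show ?thesis by (simp add: exp_inverse_poly_def)
  next
    case 2
    have "((\<lambda>x. 0) has_real_derivative 0) (at x)" by simp
    then have "(exp_inverse_poly p has_real_derivative 0) (at x)"
      by (rule has_field_derivative_transform_within_open[where S = "{..<0}"])
        (use 2 in \<open>auto simp: exp_inverse_poly_def\<close>)
    with 2 show ?thesis by (simp add: exp_inverse_poly_def)
  next
    case 3
    have "((\<lambda>t. poly (pCons 0 p) t * exp (- t)) \<longlongrightarrow> 0) at_top"
      by (rule tendsto_poly_times_exp_neg_at_top)
    then have "((\<lambda>y. poly (pCons 0 p) (inverse y) * exp (- inverse y)) \<longlongrightarrow> 0) (at_right 0)"
      using filterlim_compose filterlim_inverse_at_top_right by blast
    then have right: "((\<lambda>y. exp_inverse_poly p y / y) \<longlongrightarrow> 0) (at_right 0)"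
      by (rule Lim_transform_eventually)
        (auto simp: eventually_at_right_field exp_inverse_poly_def field_simps intro!: exI[of _ 1])
    have left: "((\<lambda>y. exp_inverse_poly p y / y) \<longlongrightarrow> 0) (at_left 0)"
      by (rule tendsto_eventually)
        (auto simp: eventually_at_left_field exp_inverse_poly_def intro!: exI[of _ "- 1"])
    from left right have "((\<lambda>y. (exp_inverse_poly p y - exp_inverse_poly p 0) / (y - 0)) \<longlongrightarrow> 0) (at 0)"
      by (simp add: filterlim_at_split exp_inverse_poly_def)
    with 3 show ?thesis by (simp add: has_field_derivative_iff exp_inverse_poly_def)
  qed
qed

lemma smooth_exp_inverse_poly: "smooth (exp_inverse_poly p)"
proof -
  have "n_times_differentiable n (exp_inverse_poly p)" for n
    using exp_inverse_poly_has_real_derivative by (induction n arbitrary: p) auto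
  then show ?thesis by (simp add: smooth_def)
qed

definition smooth_step :: "real \<Rightarrow> real" where
  "smooth_step x = exp_inverse_poly 1 x / (exp_inverse_poly 1 x + exp_inverse_poly 1 (1 - x))"

lemma exp_inverse_poly_1_sum_pos: "exp_inverse_poly 1 x + exp_inverse_poly 1 (1 - x) > 0"
  by (cases "x > 0") (auto simp: exp_inverse_poly_def add_pos_nonneg)

lemma smooth_smooth_step: "smooth smooth_step"
proof -
  have "smooth (\<lambda>x. exp_inverse_poly 1 (- 1 * x + 1))"
    by (rule smooth_compose_affine[OF smooth_exp_inverse_poly])
  moreover have "exp_inverse_poly 1 x + exp_inverse_poly 1 (1 - x) \<noteq> 0" for x
    using exp_inverse_poly_1_sum_pos[of x] by linarith
  ultimately show ?thesis
    unfolding smooth_step_def[abs_def]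
    by (intro smooth_divide smooth_add smooth_exp_inverse_poly) auto
qed

definition smooth_ramp :: "real \<Rightarrow> real" where
  "smooth_ramp x = x * smooth_step x"

lemma smooth_ramp_eq_0: "x \<le> 0 \<Longrightarrow> smooth_ramp x = 0"
  by (simp add: smooth_ramp_def smooth_step_def exp_inverse_poly_def)

lemma smooth_ramp_eq_ident: "x \<ge> 1 \<Longrightarrow> smooth_ramp x = x"
  using exp_inverse_poly_1_sum_pos[of x]
  by (simp add: smooth_ramp_def smooth_step_def exp_inverse_poly_def)

lemma smooth_smooth_ramp: "smooth smooth_ramp"
  unfolding smooth_ramp_def[abs_def] by (intro smooth_mult smooth_ident smooth_smooth_step)

lemma deriv_smooth_ramp_eq_0: "x < 0 \<Longrightarrow> deriv smooth_ramp x = 0"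
proof -
  assume "x < 0"
  have "((\<lambda>x. 0) has_real_derivative 0) (at x)" by simp
  then have "(smooth_ramp has_real_derivative 0) (at x)"
    by (rule has_field_derivative_transform_within_open[where S = "{..<0}"])
      (use \<open>x < 0\<close> smooth_ramp_eq_0 in auto)
  then show ?thesis by (rule DERIV_imp_deriv)
qed

lemma deriv_smooth_ramp_eq_1: "x > 1 \<Longrightarrow> deriv smooth_ramp x = 1"
proof -
  assume "x > 1"
  have "((\<lambda>x. x) has_real_derivative 1) (at x)" by (rule DERIV_ident)
  then have "(smooth_ramp has_real_derivative 1) (at x)"
    by (rule has_field_derivative_transform_within_open[where S = "{1<..}"])
      (use \<open>x > 1\<close> smooth_ramp_eq_ident in auto)
  then show ?thesis by (rule DERIV_imp_deriv)
qed

lemma deriv_smooth_ramp_bounded: "\<exists>K. \<forall>x. \<bar>deriv smooth_ramp x\<bar> \<le> K"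
proof -
  have "compact (deriv smooth_ramp ` {0..1})"
    using continuous_on_deriv_smooth[OF smooth_smooth_ramp] continuous_on_subset
    by (blast intro: compact_continuous_image)
  then obtain M where M: "\<forall>y \<in> deriv smooth_ramp ` {0..1}. \<bar>y\<bar> \<le> M"
    using compact_imp_bounded bounded_real by blast
  have "\<bar>deriv smooth_ramp x\<bar> \<le> max M 1" for x
    using M deriv_smooth_ramp_eq_0[of x] deriv_smooth_ramp_eq_1[of x]
    by (cases "x < 0"; cases "x > 1") (auto simp: le_max_iff_disj)
  then show ?thesis by blast
qed

section \<open>Test functions and locally integrable functions\<close>

lemma test_function_has_real_derivative:
  assumes "test_function \<phi>"
  shows "(\<phi> has_real_derivative deriv \<phi> x) (at x)"
proof -
  have "((deriv ^^ 0) \<phi>) differentiable (at x)"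
    using assms unfolding test_function_def by blast
  then show ?thesis by (simp add: DERIV_deriv_iff_real_differentiable)
qed

lemma continuous_on_deriv_test_function:
  assumes "test_function \<phi>"
  shows "continuous_on UNIV (deriv \<phi>)"
proof -
  have "((deriv ^^ 1) \<phi>) differentiable (at x)" for x
    using assms unfolding test_function_def by blast
  then have "isCont (deriv \<phi>) x" for x
    by (simp add: differentiable_imp_continuous_within)
  then show ?thesis by (simp add: continuous_at_imp_continuous_on)
qed

lemma test_function_support:
  assumes "test_function \<phi>"
  shows "\<exists>R > 0. \<forall>x. \<bar>x\<bar> > R \<longrightarrow> \<phi> x = 0 \<and> deriv \<phi> x = 0"
proof -
  from assms obtain R0 where R0: "\<And>x. \<bar>x\<bar> > R0 \<Longrightarrow> \<phi> x = 0"
    unfolding test_function_def by blast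
  define R where "R = \<bar>R0\<bar> + 1"
  have "deriv \<phi> x = 0" if x: "\<bar>x\<bar> > R" for x
  proof -
    have "((\<lambda>x. 0) has_real_derivative 0) (at x)" by simp
    moreover have "open {y :: real. R < \<bar>y\<bar>}"
      by (intro open_Collect_less continuous_intros)
    ultimately have "(\<phi> has_real_derivative 0) (at x)"
      by (rule has_field_derivative_transform_within_open[where S = "{y. R < \<bar>y\<bar>}"])
        (use x R0 in \<open>auto simp: R_def\<close>)
    then show ?thesis by (rule DERIV_imp_deriv)
  qed
  with R0 show ?thesis by (intro exI[of _ R]) (simp add: R_def)
qed

lemma test_function_deriv_bounded:
  assumes "test_function \<phi>"
  shows "\<exists>B. \<forall>x. \<bar>deriv \<phi> x\<bar> \<le> B"
proof -
  obtain R where "R > 0" and R: "\<And>x. \<bar>x\<bar> > R \<Longrightarrow> \<phi> x = 0 \<and> deriv \<phi> x = 0"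
    using test_function_support[OF assms] by blast
  have "compact (deriv \<phi> ` {-R..R})"
    using continuous_on_deriv_test_function[OF assms] continuous_on_subset
    by (blast intro: compact_continuous_image)
  then obtain M where M: "\<forall>y \<in> deriv \<phi> ` {-R..R}. \<bar>y\<bar> \<le> M"
    using compact_imp_bounded bounded_real by blast
  have "\<bar>deriv \<phi> x\<bar> \<le> max M 0" for x
  proof (cases "\<bar>x\<bar> > R")
    case False
    then have "x \<in> {-R..R}" by (auto simp: not_less dest: abs_le_D1 abs_le_D2)
    with M show ?thesis by (meson image_eqI le_max_iff_disj)
  qed (simp add: R)
  then show ?thesis by blast
qed

lemma integral_deriv_test_function:
  assumes "test_function \<phi>" "a \<le> b"
  shows "(\<integral>x. indicator {a..b} x * deriv \<phi> x \<partial>lborel) = \<phi> b - \<phi> a"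
proof -
  have "(\<integral>x. indicator {a..b} x *\<^sub>R deriv \<phi> x \<partial>lborel) = \<phi> b - \<phi> a"
  proof (rule integral_FTC_atLeastAtMost[OF assms(2)])
    show "(\<phi> has_vector_derivative deriv \<phi> x) (at x within {a..b})" for x
      using test_function_has_real_derivative[OF assms(1)]
      by (simp add: has_real_derivative_iff_has_vector_derivative has_vector_derivative_at_within)
    show "continuous_on {a..b} (deriv \<phi>)"
      using continuous_on_deriv_test_function[OF assms(1)] continuous_on_subset by blast
  qed
  then show ?thesis by simp
qed

lemma integrable_mult_bounded:
  fixes f b :: "'a \<Rightarrow> real"
  assumes "integrable M f" "b \<in> borel_measurable M" "\<And>x. \<bar>b x\<bar> \<le> C"
  shows "integrable M (\<lambda>x. f x * b x)"
proof (rule Bochner_Integration.integrable_bound[where f = "\<lambda>x. C * f x"])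
  show "integrable M (\<lambda>x. C * f x)" using assms(1) by simp
  show "(\<lambda>x. f x * b x) \<in> borel_measurable M" using assms by measurable
  have "\<bar>f x\<bar> * \<bar>b x\<bar> \<le> \<bar>f x\<bar> * C" and "C \<ge> 0" for x
    using assms(3)[of x] by (auto intro: mult_left_mono)
  then show "AE x in M. norm (f x * b x) \<le> norm (C * f x)"
    by (simp add: abs_mult mult.commute)
qed

definition locally_integrable :: "(real \<Rightarrow> real) \<Rightarrow> bool" where
  "locally_integrable u \<longleftrightarrow>
     u \<in> borel_measurable lborel \<and> (\<forall>R. integrable lborel (\<lambda>x. u x * indicator {-R..R} x))"

lemma integrable_mult_bounded_support:
  fixes u g :: "real \<Rightarrow> real"
  assumes u: "locally_integrable u"
    and g: "g \<in> borel_measurable lborel" "\<And>x. \<bar>g x\<bar> \<le> C" "\<And>x. \<bar>x\<bar> > R \<Longrightarrow> g x = 0"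
  shows "integrable lborel (\<lambda>x. u x * g x)"
proof -
  have "integrable lborel (\<lambda>x. u x * indicator {-R..R} x)"
    using u by (simp add: locally_integrable_def)
  then have "integrable lborel (\<lambda>x. u x * indicator {-R..R} x * g x)"
    using g(1,2) by (rule integrable_mult_bounded)
  moreover have "u x * indicator {-R..R} x * g x = u x * g x" for x
    using g(3)[of x] by (cases "\<bar>x\<bar> > R") (auto simp: indicator_def abs_le_iff)
  ultimately show ?thesis by simp
qed

lemma integrable_mult_indicator_interval:
  "locally_integrable u \<Longrightarrow> integrable lborel (\<lambda>x. u x * indicator {a..<b} x)"
  by (rule integrable_mult_bounded_support[where C = 1 and R = "\<bar>a\<bar> + \<bar>b\<bar>"])
    (auto simp: indicator_def)

lemma locally_integrable_diff:
  assumes "locally_integrable u" "locally_integrable v"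
  shows "locally_integrable (\<lambda>x. u x - v x)"
  unfolding locally_integrable_def
proof (intro conjI allI)
  show "(\<lambda>x. u x - v x) \<in> borel_measurable lborel"
    using assms by (intro borel_measurable_diff) (simp_all add: locally_integrable_def)
  fix R
  have "integrable lborel (\<lambda>x. u x * indicator {-R..R} x - v x * indicator {-R..R} x)"
    using assms by (intro Bochner_Integration.integrable_diff) (simp_all add: locally_integrable_def)
  then show "integrable lborel (\<lambda>x. (u x - v x) * indicator {-R..R} x)"
    by (simp add: left_diff_distrib)
qed

lemma locally_integrable_const: "locally_integrable (\<lambda>x. c)"
  by (auto simp: locally_integrable_def emeasure_lborel_Icc_eq)

lemma square_integrable_imp_locally_integrable:
  fixes f :: "real \<Rightarrow> real"
  assumes f: "f \<in> borel_measurable lborel" "integrable lborel (\<lambda>x. (f x)\<^sup>2)"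
  shows "locally_integrable f"
  unfolding locally_integrable_def
proof (intro conjI allI f(1))
  fix R
  show "integrable lborel (\<lambda>x. f x * indicator {-R..R} x)"
  proof (rule Bochner_Integration.integrable_bound)
    show "integrable lborel (\<lambda>x. (f x)\<^sup>2 + indicator {-R..R} x)"
      using f(2) by (intro Bochner_Integration.integrable_add) (auto simp: emeasure_lborel_Icc_eq)
    show "(\<lambda>x. f x * indicator {-R..R} x) \<in> borel_measurable lborel" using f by measurable
    have "\<bar>f x\<bar> \<le> (f x)\<^sup>2 + 1" for x
      using sum_squares_bound[of "\<bar>f x\<bar>" 1] by simp
    then show "AE x in lborel. norm (f x * indicator {-R..R} x) \<le> norm ((f x)\<^sup>2 + indicator {-R..R} x)"
      by (auto simp: indicator_def)
  qed
qed

section \<open>The du Bois-Reymond lemma\<close>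

text \<open>Rises from 0 left of a to 1 right of b + 1/n; as n grows, its derivative tends to the
  indicator of [a, b) divided by b - a.\<close>
definition ramp_average :: "real \<Rightarrow> real \<Rightarrow> real \<Rightarrow> real \<Rightarrow> real" where
  "ramp_average n a b x = (smooth_ramp (n * x - n * a) - smooth_ramp (n * x - n * b)) / (n * (b - a))"

lemma smooth_ramp_average: "smooth (ramp_average n a b)"
proof -
  have "smooth (\<lambda>x. smooth_ramp (n * x + (- n * c)))" for c
    by (rule smooth_compose_affine[OF smooth_smooth_ramp])
  then show ?thesis
    unfolding ramp_average_def[abs_def] divide_inverse
    by (intro smooth_mult smooth_diff smooth_const) auto
qed

lemma deriv_ramp_average:
  assumes "n \<noteq> 0"
  shows "deriv (ramp_average n a b) x =
    (deriv smooth_ramp (n * x - n * a) - deriv smooth_ramp (n * x - n * b)) / (b - a)"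
proof -
  have "((\<lambda>x. smooth_ramp (n * x - n * c)) has_real_derivative deriv smooth_ramp (n * x - n * c) * n) (at x)"
    for c
  proof -
    have "((\<lambda>x. n * x - n * c) has_real_derivative n) (at x)"
      by (auto intro!: derivative_eq_intros)
    from DERIV_chain2[OF smooth_has_real_derivative[OF smooth_smooth_ramp] this] show ?thesis
      by simp
  qed
  then have "(ramp_average n a b has_real_derivative
      (deriv smooth_ramp (n * x - n * a) * n - deriv smooth_ramp (n * x - n * b) * n) / (n * (b - a))) (at x)"
    unfolding ramp_average_def[abs_def] by (intro DERIV_diff DERIV_cdivide)
  moreover have "(deriv smooth_ramp (n * x - n * a) * n - deriv smooth_ramp (n * x - n * b) * n) / (n * (b - a))
      = (deriv smooth_ramp (n * x - n * a) - deriv smooth_ramp (n * x - n * b)) / (b - a)"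
    using assms by (simp add: left_diff_distrib[symmetric])
  ultimately show ?thesis by (simp add: DERIV_imp_deriv)
qed

lemma ramp_average_eq_0:
  assumes "n > 0" "a \<le> b" "x < a"
  shows "ramp_average n a b x = 0" "deriv (ramp_average n a b) x = 0"
proof -
  have "n * x - n * c < 0" if "x < c" for c
    using assms(1) that by (simp add: right_diff_distrib[symmetric] mult_pos_neg)
  with assms show "ramp_average n a b x = 0" "deriv (ramp_average n a b) x = 0"
    by (simp_all add: ramp_average_def deriv_ramp_average smooth_ramp_eq_0 deriv_smooth_ramp_eq_0)
qed

lemma ramp_average_eq_1:
  assumes "n \<ge> 1" "a < b" "x > b + 1"
  shows "ramp_average n a b x = 1" "deriv (ramp_average n a b) x = 0"
proof -
  have big: "n * x - n * c > 1" if "c \<le> b" for c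
  proof -
    have "1 * (x - c) \<le> n * (x - c)" using assms that by (intro mult_right_mono) auto
    then show ?thesis using assms that by (simp add: right_diff_distrib)
  qed
  have "smooth_ramp (n * x - n * a) = n * x - n * a" "smooth_ramp (n * x - n * b) = n * x - n * b"
    using big[of a] big[of b] assms(2) by (simp_all add: smooth_ramp_eq_ident)
  with assms show "ramp_average n a b x = 1"
    by (simp add: ramp_average_def right_diff_distrib[symmetric])
  show "deriv (ramp_average n a b) x = 0"
    using big[of a] big[of b] assms by (simp add: deriv_ramp_average deriv_smooth_ramp_eq_1)
qed

lemma deriv_ramp_average_bounded:
  assumes "\<And>x. \<bar>deriv smooth_ramp x\<bar> \<le> K" "n \<noteq> 0" "a < b"
  shows "\<bar>deriv (ramp_average n a b) x\<bar> \<le> 2 * K / (b - a)"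
proof -
  have "\<bar>deriv smooth_ramp (n * x - n * a) - deriv smooth_ramp (n * x - n * b)\<bar> \<le> 2 * K"
    using assms(1)[of "n * x - n * a"] assms(1)[of "n * x - n * b"] by linarith
  with assms(2,3) show ?thesis
    by (simp add: deriv_ramp_average abs_divide divide_right_mono)
qed

lemma deriv_smooth_ramp_scaled_tendsto:
  assumes "x \<noteq> a"
  shows "(\<lambda>n. deriv smooth_ramp (real (Suc n) * x - real (Suc n) * a)) \<longlonglongrightarrow> (if a < x then 1 else 0)"
proof (cases "a < x")
  case True
  obtain N where N: "real N > 1 / (x - a)" using reals_Archimedean2 by blast
  have "deriv smooth_ramp (real (Suc n) * x - real (Suc n) * a) = 1" if "N \<le> n" for n
  proof (rule deriv_smooth_ramp_eq_1)
    have "real (Suc n) > 1 / (x - a)" using N that by linarith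
    with True show "real (Suc n) * x - real (Suc n) * a > 1" by (simp add: field_simps)
  qed
  then have "\<forall>\<^sub>F n in sequentially. deriv smooth_ramp (real (Suc n) * x - real (Suc n) * a) = 1"
    by (rule eventually_sequentiallyI)
  with True show ?thesis by (simp add: tendsto_eventually)
next
  case False
  with assms have "x < a" by simp
  then have "deriv smooth_ramp (real (Suc n) * x - real (Suc n) * a) = 0" for n
    by (intro deriv_smooth_ramp_eq_0)
      (simp add: right_diff_distrib[symmetric] mult_pos_neg del: of_nat_Suc)
  with False show ?thesis by simp
qed

lemma deriv_ramp_average_tendsto:
  assumes "a < b" "x \<noteq> a" "x \<noteq> b"
  shows "(\<lambda>n. deriv (ramp_average (Suc n) a b) x) \<longlonglongrightarrow> indicator {a..<b} x / (b - a)"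
proof -
  have "(\<lambda>n. (deriv smooth_ramp (real (Suc n) * x - real (Suc n) * a)
      - deriv smooth_ramp (real (Suc n) * x - real (Suc n) * b)) / (b - a))
    \<longlonglongrightarrow> ((if a < x then 1 else 0) - (if b < x then 1 else 0)) / (b - a)"
    using assms by (intro tendsto_intros deriv_smooth_ramp_scaled_tendsto) auto
  moreover have "(if a < x then 1 else 0) - (if b < x then 1 else 0) = (indicator {a..<b} x :: real)"
    using assms by (auto simp: indicator_def)
  ultimately show ?thesis using assms(1) by (simp add: deriv_ramp_average del: of_nat_Suc)
qed

lemma ramp_average_outside:
  assumes "n \<ge> 1" "a < b" "\<bar>x\<bar> > \<bar>a\<bar> + \<bar>b\<bar> + 1"
  shows "ramp_average n a b x = (if x < 0 then 0 else 1)" "deriv (ramp_average n a b) x = 0"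
proof -
  have "x < a \<and> x < 0 \<or> x > b + 1 \<and> x \<ge> 0" using assms(3) by linarith
  with assms(1,2) show "ramp_average n a b x = (if x < 0 then 0 else 1)" "deriv (ramp_average n a b) x = 0"
    using ramp_average_eq_0[of n a b x] ramp_average_eq_1[of n a b x] by auto
qed

lemma abs_deriv_ramp_average_le:
  assumes K: "\<And>x. \<bar>deriv smooth_ramp x\<bar> \<le> K" and "n \<ge> 1" "a < b"
  shows "\<bar>deriv (ramp_average n a b) x\<bar>
    \<le> 2 * K / (b - a) * indicator {- (\<bar>a\<bar> + \<bar>b\<bar> + 1)..\<bar>a\<bar> + \<bar>b\<bar> + 1} x"
proof (cases "\<bar>x\<bar> > \<bar>a\<bar> + \<bar>b\<bar> + 1")
  case True
  then have "x \<notin> {- (\<bar>a\<bar> + \<bar>b\<bar> + 1)..\<bar>a\<bar> + \<bar>b\<bar> + 1}"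
    by (cases "x \<ge> 0") auto
  with True assms(2,3) show ?thesis by (simp add: ramp_average_outside(2))
next
  case False
  then have "x \<in> {- (\<bar>a\<bar> + \<bar>b\<bar> + 1)..\<bar>a\<bar> + \<bar>b\<bar> + 1}"
    by (auto simp: not_less dest: abs_le_D1 abs_le_D2)
  with deriv_ramp_average_bounded[OF K, of n a b x] assms(2,3) show ?thesis by simp
qed

lemma integrable_mult_deriv_ramp_average:
  assumes u: "locally_integrable u" and "n \<ge> 1" "a < b"
  shows "integrable lborel (\<lambda>x. u x * deriv (ramp_average n a b) x)"
proof -
  obtain K where K: "\<And>x. \<bar>deriv smooth_ramp x\<bar> \<le> K" using deriv_smooth_ramp_bounded by blast
  show ?thesis
  proof (rule integrable_mult_bounded_support[OF u])
    show "deriv (ramp_average n a b) \<in> borel_measurable lborel"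
      using borel_measurable_deriv_smooth[OF smooth_ramp_average] by simp
    show "\<bar>deriv (ramp_average n a b) x\<bar> \<le> 2 * K / (b - a)" for x
      using assms K by (intro deriv_ramp_average_bounded) auto
    show "\<bar>x\<bar> > \<bar>a\<bar> + \<bar>b\<bar> + 1 \<Longrightarrow> deriv (ramp_average n a b) x = 0" for x
      using assms by (intro ramp_average_outside(2))
  qed
qed

lemma test_function_ramp_average_diff:
  assumes "n \<ge> 1" "a < b" "p < q"
  shows "test_function (\<lambda>x. ramp_average n a b x - ramp_average n p q x)"
proof (rule test_functionI)
  show "smooth (\<lambda>x. ramp_average n a b x - ramp_average n p q x)"
    by (intro smooth_diff smooth_ramp_average)
  fix x assume x: "\<bar>x\<bar> > \<bar>a\<bar> + \<bar>b\<bar> + \<bar>p\<bar> + \<bar>q\<bar> + 1"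
  have "\<bar>x\<bar> > \<bar>a\<bar> + \<bar>b\<bar> + 1" "\<bar>x\<bar> > \<bar>p\<bar> + \<bar>q\<bar> + 1"
    using x abs_ge_zero[of a] abs_ge_zero[of b] abs_ge_zero[of p] abs_ge_zero[of q] by linarith+
  with assms show "ramp_average n a b x - ramp_average n p q x = 0"
    using ramp_average_outside(1)[of n a b x] ramp_average_outside(1)[of n p q x] by simp
qed

lemma deriv_ramp_average_diff:
  "deriv (\<lambda>x. ramp_average n a b x - ramp_average n p q x) x =
    deriv (ramp_average n a b) x - deriv (ramp_average n p q) x"
  by (intro DERIV_imp_deriv DERIV_diff smooth_has_real_derivative smooth_ramp_average)

lemma tendsto_integral_mult_deriv_ramp_average:
  fixes u :: "real \<Rightarrow> real"
  assumes u: "locally_integrable u" and ab: "a < b"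
  shows "(\<lambda>n. \<integral>x. u x * deriv (ramp_average (Suc n) a b) x \<partial>lborel)
    \<longlonglongrightarrow> (\<integral>x. u x * indicator {a..<b} x \<partial>lborel) / (b - a)"
proof -
  obtain K where K: "\<And>x. \<bar>deriv smooth_ramp x\<bar> \<le> K" using deriv_smooth_ramp_bounded by blast
  define R where "R = \<bar>a\<bar> + \<bar>b\<bar> + 1"
  define w where "w x = 2 * K / (b - a) * \<bar>u x * indicator {-R..R} x\<bar>" for x
  have [measurable]: "u \<in> borel_measurable borel" using u by (simp add: locally_integrable_def)
  have [measurable]: "deriv (ramp_average (Suc n) a b) \<in> borel_measurable borel" for n
    by (rule borel_measurable_deriv_smooth[OF smooth_ramp_average])
  have "(\<lambda>n. \<integral>x. u x * deriv (ramp_average (Suc n) a b) x \<partial>lborel)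
      \<longlonglongrightarrow> (\<integral>x. u x * (indicator {a..<b} x / (b - a)) \<partial>lborel)"
  proof (rule integral_dominated_convergence[where w = w])
    show "(\<lambda>x. u x * (indicator {a..<b} x / (b - a))) \<in> borel_measurable lborel"
      by measurable
    show "(\<lambda>x. u x * deriv (ramp_average (Suc n) a b) x) \<in> borel_measurable lborel" for n
      by measurable
    show "integrable lborel w"
      using u unfolding w_def by (intro integrable_mult_right integrable_abs) (simp add: locally_integrable_def)
    have "AE x in lborel. x \<noteq> a \<and> x \<noteq> b" by (intro AE_conjI AE_lborel_singleton)
    then show "AE x in lborel. (\<lambda>n. u x * deriv (ramp_average (Suc n) a b) x)
        \<longlonglongrightarrow> u x * (indicator {a..<b} x / (b - a))"
    proof eventually_elim
      case (elim x)
      then show ?case using deriv_ramp_average_tendsto[OF ab] by (intro tendsto_mult_left) auto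
    qed
    show "AE x in lborel. norm (u x * deriv (ramp_average (Suc n) a b) x) \<le> w x" for n
    proof (rule AE_I2)
      fix x
      have "\<bar>u x\<bar> * \<bar>deriv (ramp_average (Suc n) a b) x\<bar> \<le> \<bar>u x\<bar> * (2 * K / (b - a) * indicator {-R..R} x)"
        using abs_deriv_ramp_average_le[OF K, of "Suc n" a b x] ab
        by (intro mult_left_mono) (simp_all add: R_def)
      then show "norm (u x * deriv (ramp_average (Suc n) a b) x) \<le> w x"
        by (simp add: w_def abs_mult mult_ac)
    qed
  qed
  then show ?thesis by simp
qed

text \<open>A single ramp average is not compactly supported, but the difference of two is.\<close>
lemma du_bois_reymond_interval_averages:
  fixes u :: "real \<Rightarrow> real"
  assumes u: "locally_integrable u"
    and orth: "\<And>\<phi>. test_function \<phi> \<Longrightarrow> (\<integral>x. u x * deriv \<phi> x \<partial>lborel) = 0"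
    and ab: "a < b" and pq: "p < q"
  shows "(\<integral>x. u x * indicator {a..<b} x \<partial>lborel) / (b - a)
    = (\<integral>x. u x * indicator {p..<q} x \<partial>lborel) / (q - p)"
proof -
  have "(\<integral>x. u x * deriv (ramp_average (Suc n) a b) x \<partial>lborel)
      - (\<integral>x. u x * deriv (ramp_average (Suc n) p q) x \<partial>lborel) = 0" for n
  proof -
    let ?\<phi> = "\<lambda>x. ramp_average (Suc n) a b x - ramp_average (Suc n) p q x"
    have "(\<integral>x. u x * deriv ?\<phi> x \<partial>lborel) = 0"
      using ab pq by (intro orth test_function_ramp_average_diff) auto
    then show ?thesis
      using integrable_mult_deriv_ramp_average[OF u _ ab, of "Suc n"]
        integrable_mult_deriv_ramp_average[OF u _ pq, of "Suc n"]
      by (simp add: deriv_ramp_average_diff right_diff_distrib)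
  qed
  moreover have "(\<lambda>n. (\<integral>x. u x * deriv (ramp_average (Suc n) a b) x \<partial>lborel)
      - (\<integral>x. u x * deriv (ramp_average (Suc n) p q) x \<partial>lborel))
    \<longlonglongrightarrow> (\<integral>x. u x * indicator {a..<b} x \<partial>lborel) / (b - a)
      - (\<integral>x. u x * indicator {p..<q} x \<partial>lborel) / (q - p)"
    by (intro tendsto_diff tendsto_integral_mult_deriv_ramp_average u ab pq)
  ultimately show ?thesis
    by (simp add: LIMSEQ_const_iff)
qed

lemma tendsto_set_integral_symmetric_intervals:
  fixes w :: "real \<Rightarrow> real"
  assumes w: "integrable lborel w"
  shows "(\<lambda>n. set_lebesgue_integral lborel {- real n..<real n} w) \<longlonglongrightarrow> (\<integral>x. w x \<partial>lborel)"
proof -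
  have "(\<lambda>n. set_lebesgue_integral lborel {- real n..<real n} w)
      \<longlonglongrightarrow> set_lebesgue_integral lborel (\<Union>n. {- real n..<real n}) w"
  proof (rule set_integral_cont_up)
    show "incseq (\<lambda>n. {- real n..<real n})"
      by (rule monoI) auto
    show "set_integrable lborel (\<Union>n. {- real n..<real n}) w"
      unfolding set_integrable_def by (rule integrable_mult_indicator[OF _ w]) auto
  qed auto
  moreover have "(\<Union>n. {- real n..<real n}) = UNIV"
  proof -
    have "x \<in> (\<Union>n. {- real n..<real n})" for x :: real
    proof -
      obtain n where "real n > \<bar>x\<bar>" using reals_Archimedean2 by blast
      then show ?thesis by (intro UN_I[of n]) auto
    qed
    then show ?thesis by auto
  qed
  ultimately show ?thesis by (simp add: set_lebesgue_integral_def)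
qed

lemma set_integral_eq_0_if_interval_integrals_eq_0:
  fixes w :: "real \<Rightarrow> real"
  assumes w: "integrable lborel w"
    and zero: "\<And>a b. (\<integral>x. w x * indicator {a..<b} x \<partial>lborel) = 0"
    and A: "A \<in> sets lborel"
  shows "set_lebesgue_integral lborel A w = 0"
proof -
  let ?G = "range (\<lambda>(a, b). {a..<b :: real})"
  have generator: "sets lborel = sigma_sets UNIV ?G"
    by (subst sets_lborel, subst borel_eq_atLeastLessThan) simp
  have "Int_stable ?G"
  proof (rule Int_stableI)
    fix A B assume "A \<in> ?G" "B \<in> ?G"
    then obtain a b c d where "A = {a..<b}" "B = {c..<d}" by auto
    then have "A \<inter> B = {max a c..<min b d}" by auto
    then show "A \<inter> B \<in> ?G" by auto
  qed
  have set_integral_interval: "set_lebesgue_integral lborel {a..<b} w = 0" for a b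
    using zero[of a b] by (simp add: set_lebesgue_integral_def mult.commute)
  have total: "(\<integral>x. w x \<partial>lborel) = 0"
    using tendsto_set_integral_symmetric_intervals[OF w] by (simp add: set_integral_interval LIMSEQ_const_iff)
  have closed: "?G \<subseteq> Pow UNIV" by simp
  from A have "A \<in> sigma_sets UNIV ?G" unfolding generator .
  with \<open>Int_stable ?G\<close> closed show ?thesis
  proof (induction rule: sigma_sets_induct_disjoint)
    case (basic A)
    then show ?case using set_integral_interval by auto
  next
    case empty
    then show ?case by (simp add: set_lebesgue_integral_def)
  next
    case (compl A)
    have "A \<in> sets lborel" using compl(1) unfolding generator .
    then have "integrable lborel (\<lambda>x. indicator A x * w x)"
      using integrable_mult_indicator[OF _ w] by simp
    then have "(\<integral>x. w x - indicator A x * w x \<partial>lborel)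
        = (\<integral>x. w x \<partial>lborel) - set_lebesgue_integral lborel A w"
      using w by (simp add: Bochner_Integration.integral_diff set_lebesgue_integral_def)
    moreover have "set_lebesgue_integral lborel (UNIV - A) w = (\<integral>x. w x - indicator A x * w x \<partial>lborel)"
      unfolding set_lebesgue_integral_def
      by (intro Bochner_Integration.integral_cong) (auto simp: indicator_def)
    ultimately show ?case using compl.IH total by simp
  next
    case (union A)
    have sets_A: "A i \<in> sets lborel" for i using union.hyps(2) unfolding generator by auto
    moreover have "set_integrable lborel (\<Union>i. A i) w"
      unfolding set_integrable_def using sets_A by (intro integrable_mult_indicator w) auto
    ultimately have "set_lebesgue_integral lborel (\<Union>i. A i) w = (\<Sum>i. set_lebesgue_integral lborel (A i) w)"
      using union.hyps(1) by (intro lebesgue_integral_countable_add) (auto simp: disjoint_family_on_def)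
    with union.IH show ?case by simp
  qed
qed

lemma AE_zero_if_interval_integrals_zero:
  fixes w :: "real \<Rightarrow> real"
  assumes w: "integrable lborel w"
    and zero: "\<And>a b. (\<integral>x. w x * indicator {a..<b} x \<partial>lborel) = 0"
  shows "AE x in lborel. w x = 0"
  using set_integral_eq_0_if_interval_integrals_eq_0[OF w zero]
  by (rule sigma_finite_measure.density_zero[OF sigma_finite_lborel w])

lemma locally_integrable_AE_zero_if_interval_integrals_zero:
  fixes v :: "real \<Rightarrow> real"
  assumes v: "locally_integrable v"
    and zero: "\<And>a b. a < b \<Longrightarrow> (\<integral>x. v x * indicator {a..<b} x \<partial>lborel) = 0"
  shows "AE x in lborel. v x = 0"
proof -
  have "AE x in lborel. v x * indicator {- real n..<real n} x = 0" for n :: nat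
  proof (rule AE_zero_if_interval_integrals_zero)
    show "integrable lborel (\<lambda>x. v x * indicator {- real n..<real n} x)"
      using integrable_mult_indicator_interval[OF v] .
    fix a b
    have truncate: "(\<lambda>x. v x * indicator {- real n..<real n} x * indicator {a..<b} x)
        = (\<lambda>x. v x * indicator {max a (- real n)..<min b (real n)} x)"
      by (auto simp: fun_eq_iff indicator_def)
    have "(\<integral>x. v x * indicator {max a (- real n)..<min b (real n)} x \<partial>lborel) = 0"
      using zero by (cases "max a (- real n) < min b (real n)") auto
    then show "(\<integral>x. v x * indicator {- real n..<real n} x * indicator {a..<b} x \<partial>lborel) = 0"
      by (simp only: truncate)
  qed
  then have "AE x in lborel. \<forall>n :: nat. v x * indicator {- real n..<real n} x = 0"
    by (subst AE_all_countable) (simp del: mult_eq_0_iff)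
  then show ?thesis
  proof eventually_elim
    case (elim x)
    obtain n :: nat where "real n > \<bar>x\<bar>" using reals_Archimedean2 by blast
    with elim[rule_format, of n] show ?case by (auto simp: indicator_def)
  qed
qed

lemma du_bois_reymond:
  fixes u :: "real \<Rightarrow> real"
  assumes u: "locally_integrable u"
    and orth: "\<And>\<phi>. test_function \<phi> \<Longrightarrow> (\<integral>x. u x * deriv \<phi> x \<partial>lborel) = 0"
  shows "\<exists>C. AE x in lborel. u x = C"
proof
  define C where "C = (\<integral>x. u x * indicator {0..<1} x \<partial>lborel)"
  have "AE x in lborel. u x - C = 0"
  proof (rule locally_integrable_AE_zero_if_interval_integrals_zero)
    show "locally_integrable (\<lambda>x. u x - C)"
      by (intro locally_integrable_diff u locally_integrable_const)
    fix a b :: real assume "a < b"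
    then have "(\<integral>x. u x * indicator {a..<b} x \<partial>lborel) = C * (b - a)"
      using du_bois_reymond_interval_averages[OF u orth \<open>a < b\<close>, of 0 1]
      by (simp add: C_def field_simps)
    moreover have "(\<lambda>x. (u x - C) * indicator {a..<b} x) = (\<lambda>x. u x * indicator {a..<b} x - C * indicator {a..<b} x)"
      by (simp add: fun_eq_iff left_diff_distrib)
    ultimately show "(\<integral>x. (u x - C) * indicator {a..<b} x \<partial>lborel) = 0"
      using \<open>a < b\<close> integrable_mult_indicator_interval[OF u]
      by (simp add: Bochner_Integration.integral_diff)
  qed
  then show "AE x in lborel. u x = C" by simp
qed

section \<open>Primitives and the absolutely continuous representative\<close>

lemma integrable_mult_deriv_test_function:
  assumes u: "locally_integrable u" and \<phi>: "test_function \<phi>"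
  shows "integrable lborel (\<lambda>x. u x * deriv \<phi> x)"
proof -
  obtain R where "R > 0" and R: "\<And>x. \<bar>x\<bar> > R \<Longrightarrow> \<phi> x = 0 \<and> deriv \<phi> x = 0"
    using test_function_support[OF \<phi>] by blast
  obtain B where B: "\<And>x. \<bar>deriv \<phi> x\<bar> \<le> B"
    using test_function_deriv_bounded[OF \<phi>] by blast
  have "deriv \<phi> \<in> borel_measurable borel"
    using continuous_on_deriv_test_function[OF \<phi>] by (rule borel_measurable_continuous_onI)
  with u B R show ?thesis by (intro integrable_mult_bounded_support) auto
qed

lemma integral_deriv_test_function_greaterThan:
  assumes \<phi>: "test_function \<phi>"
  shows "(\<integral>x. deriv \<phi> x * indicator {t<..} x \<partial>lborel) = - \<phi> t"
proof -
  obtain R where R: "R > 0" "\<And>x. \<bar>x\<bar> > R \<Longrightarrow> \<phi> x = 0 \<and> deriv \<phi> x = 0"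
    using test_function_support[OF \<phi>] by blast
  show ?thesis
  proof (cases "t > R")
    case True
    have "deriv \<phi> x * indicator {t<..} x = 0" for x
    proof (cases "t < x")
      case True
      with \<open>t > R\<close> have "\<bar>x\<bar> > R" by linarith
      then show ?thesis using R(2) by simp
    qed simp
    moreover have "\<phi> t = 0" using R(2)[of t] True by linarith
    ultimately show ?thesis by (simp only: Bochner_Integration.integral_zero neg_0_equal_iff_equal)
  next
    case False
    have "AE x in lborel. deriv \<phi> x * indicator {t<..} x = indicator {t..R + 1} x * deriv \<phi> x"
      using AE_lborel_singleton[of t]
    proof eventually_elim
      case (elim x)
      show ?case
      proof (cases "x > R + 1")
        case True
        then have "\<bar>x\<bar> > R" by linarith
        with R(2) show ?thesis by simp
      qed (use elim in \<open>auto simp: indicator_def\<close>)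
    qed
    moreover have "deriv \<phi> \<in> borel_measurable borel"
      using continuous_on_deriv_test_function[OF \<phi>] by (rule borel_measurable_continuous_onI)
    ultimately have "(\<integral>x. deriv \<phi> x * indicator {t<..} x \<partial>lborel)
        = (\<integral>x. indicator {t..R + 1} x * deriv \<phi> x \<partial>lborel)"
      by (intro integral_cong_AE) auto
    also have "\<dots> = \<phi> (R + 1) - \<phi> t"
      using False by (intro integral_deriv_test_function[OF \<phi>]) auto
    finally show ?thesis using R by simp
  qed
qed

lemma integral_deriv_test_function_eq_0:
  assumes \<phi>: "test_function \<phi>"
  shows "(\<integral>x. deriv \<phi> x \<partial>lborel) = 0"
proof -
  obtain R where R: "R > 0" "\<And>x. \<bar>x\<bar> > R \<Longrightarrow> \<phi> x = 0 \<and> deriv \<phi> x = 0"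
    using test_function_support[OF \<phi>] by blast
  have truncate: "deriv \<phi> x * indicator {- R - 1<..} x = deriv \<phi> x" for x
  proof (cases "x > - R - 1")
    case False
    then have "\<bar>x\<bar> > R" by linarith
    with R(2) show ?thesis by simp
  qed simp
  have "(\<integral>x. deriv \<phi> x \<partial>lborel) = (\<integral>x. deriv \<phi> x * indicator {- R - 1<..} x \<partial>lborel)"
    by (simp only: truncate)
  also have "\<dots> = - \<phi> (- R - 1)"
    by (rule integral_deriv_test_function_greaterThan[OF \<phi>])
  finally have "(\<integral>x. deriv \<phi> x \<partial>lborel) = - \<phi> (- R - 1)" .
  with R show ?thesis by simp
qed

lemma integral_swap_bounded_kernel:
  fixes k f :: "real \<Rightarrow> real" and Q :: "real \<Rightarrow> real \<Rightarrow> real"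
  assumes k: "integrable lborel k" and f: "integrable lborel f"
    and Q: "(\<lambda>(x, t). Q x t) \<in> borel_measurable (lborel \<Otimes>\<^sub>M lborel)" "\<And>x t. \<bar>Q x t\<bar> \<le> 1"
  shows "(\<integral>x. (\<integral>t. k x * f t * Q x t \<partial>lborel) \<partial>lborel)
    = (\<integral>t. (\<integral>x. k x * f t * Q x t \<partial>lborel) \<partial>lborel)"
proof -
  have [measurable]: "k \<in> borel_measurable borel" "f \<in> borel_measurable borel"
    "(\<lambda>(x, t). Q x t) \<in> borel_measurable (borel \<Otimes>\<^sub>M borel)"
    using k f Q(1) by (auto simp: measurable_def space_pair_measure sets_pair_measure)
  have slice: "integrable lborel (\<lambda>t. k x * f t * Q x t)" for x
  proof -
    have "Q x \<in> borel_measurable lborel" by measurable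
    with f Q(2) have "integrable lborel (\<lambda>t. f t * Q x t)" by (intro integrable_mult_bounded)
    then show ?thesis using integrable_mult_right by (simp add: mult.assoc)
  qed
  have "integrable (lborel \<Otimes>\<^sub>M lborel) (\<lambda>(x, t). k x * f t * Q x t)"
  proof (rule lborel_pair.Fubini_integrable)
    have "(\<lambda>p. k (fst p) * f (snd p) * (case p of (x, t) \<Rightarrow> Q x t)) \<in> borel_measurable (borel \<Otimes>\<^sub>M borel)"
      by measurable
    then show "(\<lambda>(x, t). k x * f t * Q x t) \<in> borel_measurable (lborel \<Otimes>\<^sub>M lborel)"
      by (simp add: case_prod_beta' measurable_def space_pair_measure sets_pair_measure)
    have bound: "(\<integral>t. norm (k x * f t * Q x t) \<partial>lborel) \<le> (\<integral>t. \<bar>k x\<bar> * \<bar>f t\<bar> \<partial>lborel)" for x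
    proof (rule integral_mono)
      show "integrable lborel (\<lambda>t. norm (k x * f t * Q x t))" using slice by simp
      show "integrable lborel (\<lambda>t. \<bar>k x\<bar> * \<bar>f t\<bar>)" using f by simp
      show "norm (k x * f t * Q x t) \<le> \<bar>k x\<bar> * \<bar>f t\<bar>" for t
        using mult_left_mono[OF Q(2)[of x t], of "\<bar>k x\<bar> * \<bar>f t\<bar>"] by (simp add: abs_mult)
    qed
    show "integrable lborel (\<lambda>x. \<integral>t. norm (case (x, t) of (x, t) \<Rightarrow> k x * f t * Q x t) \<partial>lborel)"
    proof (rule Bochner_Integration.integrable_bound)
      show "integrable lborel (\<lambda>x. \<bar>k x\<bar> * (\<integral>t. \<bar>f t\<bar> \<partial>lborel))"
        using k by (intro integrable_mult_left integrable_abs)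
      have "(\<lambda>x. \<integral>t. norm (k x * f t * Q x t) \<partial>lborel) \<in> borel_measurable borel"
        by measurable
      then show "(\<lambda>x. \<integral>t. norm (case (x, t) of (x, t) \<Rightarrow> k x * f t * Q x t) \<partial>lborel)
          \<in> borel_measurable lborel"
        by simp
      show "AE x in lborel. norm (\<integral>t. norm (case (x, t) of (x, t) \<Rightarrow> k x * f t * Q x t) \<partial>lborel)
          \<le> norm (\<bar>k x\<bar> * (\<integral>t. \<bar>f t\<bar> \<partial>lborel))"
        using bound by (intro AE_I2) simp
    qed
    show "AE x in lborel. integrable lborel (\<lambda>t. case (x, t) of (x, t) \<Rightarrow> k x * f t * Q x t)"
      using slice by simp
  qed
  then show ?thesis
    using lborel_pair.Fubini_integral[of "\<lambda>x t. k x * f t * Q x t"] by simp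
qed

text \<open>The signed integral of g from 0 to x, written with indicators so that Fubini applies.\<close>
definition primitive :: "(real \<Rightarrow> real) \<Rightarrow> real \<Rightarrow> real" where
  "primitive g x = (\<integral>t. g t * (indicator {..<x} t - indicator {..<0} t) \<partial>lborel)"

lemma integrable_primitive_integrand:
  "locally_integrable g \<Longrightarrow> integrable lborel (\<lambda>t. g t * (indicator {..<x} t - indicator {..<0} t))"
  by (rule integrable_mult_bounded_support[where C = 1 and R = "\<bar>x\<bar>"]) (auto simp: indicator_def)

lemma primitive_diff:
  assumes "locally_integrable g" "x \<le> y"
  shows "primitive g y - primitive g x = (\<integral>t. g t * indicator {x..<y} t \<partial>lborel)"
proof -
  have "primitive g y - primitive g x = (\<integral>t. g t * (indicator {..<y} t - indicator {..<0} t)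
      - g t * (indicator {..<x} t - indicator {..<0} t) \<partial>lborel)"
    unfolding primitive_def
    by (intro Bochner_Integration.integral_diff[symmetric] integrable_primitive_integrand assms(1))
  also have "\<dots> = (\<integral>t. g t * indicator {x..<y} t \<partial>lborel)"
    using assms(2) by (intro Bochner_Integration.integral_cong) (auto simp: indicator_def)
  finally show ?thesis .
qed

lemma measurable_primitive:
  assumes "g \<in> borel_measurable lborel"
  shows "primitive g \<in> borel_measurable borel"
proof -
  have [measurable]: "g \<in> borel_measurable borel" using assms by simp
  show ?thesis unfolding primitive_def[abs_def] indicator_def lessThan_iff by measurable
qed

lemma locally_integrable_primitive:
  assumes g: "locally_integrable g"
  shows "locally_integrable (primitive g)"
  unfolding locally_integrable_def
proof (intro conjI allI)
  show "primitive g \<in> borel_measurable lborel"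
    using g measurable_primitive by (simp add: locally_integrable_def)
  fix R
  let ?M = "\<integral>t. \<bar>g t * indicator {-\<bar>R\<bar>..\<bar>R\<bar>} t\<bar> \<partial>lborel"
  have bound: "\<bar>primitive g x\<bar> \<le> ?M" if "x \<in> {-R..R}" for x
    unfolding primitive_def
  proof (rule integral_abs_bound_integral)
    show "integrable lborel (\<lambda>t. g t * (indicator {..<x} t - indicator {..<0} t))"
      using g by (rule integrable_primitive_integrand)
    show "integrable lborel (\<lambda>t. \<bar>g t * indicator {-\<bar>R\<bar>..\<bar>R\<bar>} t\<bar>)"
      using g by (simp add: locally_integrable_def)
    show "\<bar>g t * (indicator {..<x} t - indicator {..<0} t)\<bar> \<le> \<bar>g t * indicator {-\<bar>R\<bar>..\<bar>R\<bar>} t\<bar>" for t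
      using that by (auto simp: indicator_def abs_mult)
  qed
  have [measurable]: "primitive g \<in> borel_measurable borel"
    using g measurable_primitive by (simp add: locally_integrable_def)
  show "integrable lborel (\<lambda>x. primitive g x * indicator {-R..R} x)"
  proof (rule Bochner_Integration.integrable_bound[where f = "\<lambda>x. ?M * indicator {-R..R} x"])
    show "integrable lborel (\<lambda>x. ?M * indicator {-R..R} x)"
      by (intro integrable_mult_right) (simp add: emeasure_lborel_Icc_eq)
    show "(\<lambda>x. primitive g x * indicator {-R..R} x) \<in> borel_measurable lborel"
      by measurable
    have "norm (primitive g x * indicator {-R..R} x) \<le> norm (?M * indicator {-R..R} x)" for x
      using bound[of x] by (cases "x \<in> {-R..R}") (simp_all add: order_trans[OF _ abs_ge_self])
    then show "AE x in lborel. norm (primitive g x * indicator {-R..R} x) \<le> norm (?M * indicator {-R..R} x)"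
      by (rule AE_I2)
  qed
qed

lemma integral_deriv_test_function_mult_cumulative:
  fixes G :: "real \<Rightarrow> real"
  assumes \<phi>: "test_function \<phi>" and G: "integrable lborel G"
  shows "(\<integral>x. deriv \<phi> x * (\<integral>t. G t * indicator {..<x} t \<partial>lborel) \<partial>lborel)
    = - (\<integral>t. G t * \<phi> t \<partial>lborel)"
proof -
  have d\<phi>: "integrable lborel (deriv \<phi>)"
    using integrable_mult_deriv_test_function[OF locally_integrable_const \<phi>, of 1] by simp
  have swap: "deriv \<phi> x * G t * indicator {..<x} t = G t * (deriv \<phi> x * indicator {t<..} x)" for x t
    by (simp add: indicator_def)
  have "(\<integral>x. deriv \<phi> x * (\<integral>t. G t * indicator {..<x} t \<partial>lborel) \<partial>lborel)
      = (\<integral>x. (\<integral>t. deriv \<phi> x * G t * indicator {..<x} t \<partial>lborel) \<partial>lborel)"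
    by (simp add: mult.assoc)
  also have "\<dots> = (\<integral>t. (\<integral>x. deriv \<phi> x * G t * indicator {..<x} t \<partial>lborel) \<partial>lborel)"
    by (rule integral_swap_bounded_kernel[OF d\<phi> G]) (auto simp: indicator_def)
  also have "\<dots> = (\<integral>t. G t * - \<phi> t \<partial>lborel)"
    by (simp only: swap integral_mult_right_zero integral_deriv_test_function_greaterThan[OF \<phi>])
  finally show ?thesis by simp
qed

lemma primitive_weak_deriv:
  assumes g: "locally_integrable g" and \<phi>: "test_function \<phi>"
  shows "(\<integral>x. primitive g x * deriv \<phi> x \<partial>lborel) = - (\<integral>x. g x * \<phi> x \<partial>lborel)"
proof -
  obtain R where R: "R > 0" "\<And>x. \<bar>x\<bar> > R \<Longrightarrow> \<phi> x = 0 \<and> deriv \<phi> x = 0"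
    using test_function_support[OF \<phi>] by blast
  define gR where "gR t = g t * indicator {-R..R} t" for t
  define A where "A x = (\<integral>t. gR t * indicator {..<x} t \<partial>lborel)" for x
  have gR: "integrable lborel gR"
    unfolding gR_def using g by (simp add: locally_integrable_def)
  have d\<phi>: "integrable lborel (deriv \<phi>)"
    using integrable_mult_deriv_test_function[OF locally_integrable_const \<phi>, of 1] by simp
  have "primitive g x * deriv \<phi> x = deriv \<phi> x * A x - A 0 * deriv \<phi> x" for x
  proof (cases "\<bar>x\<bar> > R")
    case False
    then have "primitive g x = (\<integral>t. gR t * indicator {..<x} t - gR t * indicator {..<0} t \<partial>lborel)"
      unfolding primitive_def gR_def
      by (intro Bochner_Integration.integral_cong) (auto simp: indicator_def)
    also have "\<dots> = A x - A 0"
      unfolding A_def using gR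
      by (intro Bochner_Integration.integral_diff integrable_mult_bounded) auto
    finally have primitive_eq: "primitive g x = A x - A 0" .
    show ?thesis unfolding primitive_eq by (simp add: algebra_simps)
  qed (use R in simp)
  moreover have "integrable lborel (\<lambda>x. deriv \<phi> x * A x)"
  proof (rule integrable_mult_bounded[OF d\<phi>])
    have [measurable]: "gR \<in> borel_measurable borel" using gR by auto
    show "A \<in> borel_measurable lborel"
      unfolding A_def[abs_def] indicator_def lessThan_iff by measurable
    show "\<bar>A x\<bar> \<le> (\<integral>t. \<bar>gR t\<bar> \<partial>lborel)" for x
      unfolding A_def using gR
      by (intro integral_abs_bound_integral integrable_mult_bounded) (auto simp: abs_mult indicator_def)
  qed
  ultimately have "(\<integral>x. primitive g x * deriv \<phi> x \<partial>lborel) = (\<integral>x. deriv \<phi> x * A x \<partial>lborel)"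
    using d\<phi> integral_deriv_test_function_eq_0[OF \<phi>] by simp
  also have "\<dots> = - (\<integral>t. gR t * \<phi> t \<partial>lborel)"
    unfolding A_def by (rule integral_deriv_test_function_mult_cumulative[OF \<phi> gR])
  also have "\<dots> = - (\<integral>t. g t * \<phi> t \<partial>lborel)"
  proof -
    have truncate: "gR t * \<phi> t = g t * \<phi> t" for t
      using R(2)[of t] by (cases "\<bar>t\<bar> > R") (auto simp: gR_def indicator_def abs_le_iff)
    show ?thesis by (simp only: truncate)
  qed
  finally show ?thesis .
qed

lemma H1_weak_deriv_AE_eq_primitive:
  assumes H1: "H1_weak_deriv h h'"
  obtains C where "AE x in lborel. h x = primitive h' x + C"
proof -
  have h: "locally_integrable h" and h': "locally_integrable h'"
    using H1 by (auto simp: H1_weak_deriv_def intro: square_integrable_imp_locally_integrable)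
  have "\<exists>C. AE x in lborel. h x - primitive h' x = C"
  proof (rule du_bois_reymond)
    show "locally_integrable (\<lambda>x. h x - primitive h' x)"
      by (intro locally_integrable_diff h locally_integrable_primitive h')
    fix \<phi> assume \<phi>: "test_function \<phi>"
    have "(\<integral>x. (h x - primitive h' x) * deriv \<phi> x \<partial>lborel)
        = (\<integral>x. h x * deriv \<phi> x \<partial>lborel) - (\<integral>x. primitive h' x * deriv \<phi> x \<partial>lborel)"
      using integrable_mult_deriv_test_function[OF h \<phi>]
        integrable_mult_deriv_test_function[OF locally_integrable_primitive[OF h'] \<phi>]
      by (simp add: left_diff_distrib)
    also have "\<dots> = 0"
      using H1 \<phi> primitive_weak_deriv[OF h' \<phi>] by (simp add: H1_weak_deriv_def)
    finally show "(\<integral>x. (h x - primitive h' x) * deriv \<phi> x \<partial>lborel) = 0" .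
  qed
  then show ?thesis using that by (auto simp: algebra_simps)
qed

lemma H1_weak_deriv_representative:
  assumes H1: "H1_weak_deriv h h'"
  obtains H where "H \<in> borel_measurable borel" "AE x in lborel. h x = H x"
    "\<And>a b. a \<le> b \<Longrightarrow> H b - H a = (\<integral>t. h' t * indicator {a..<b} t \<partial>lborel)"
proof -
  obtain C where ae: "AE x in lborel. h x = primitive h' x + C"
    using H1_weak_deriv_AE_eq_primitive[OF H1] .
  have h': "locally_integrable h'"
    using H1 by (auto simp: H1_weak_deriv_def intro: square_integrable_imp_locally_integrable)
  have [measurable]: "primitive h' \<in> borel_measurable borel"
    using h' measurable_primitive by (simp add: locally_integrable_def)
  show ?thesis
  proof (rule that[of "\<lambda>x. primitive h' x + C"])
    show "(\<lambda>x. primitive h' x + C) \<in> borel_measurable borel" by measurable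
    show "AE x in lborel. h x = primitive h' x + C" by (rule ae)
    show "primitive h' b + C - (primitive h' a + C) = (\<integral>t. h' t * indicator {a..<b} t \<partial>lborel)"
      if "a \<le> b" for a b
      using primitive_diff[OF h' that] by simp
  qed
qed

lemma integrable_mult_increment_function:
  fixes H g :: "real \<Rightarrow> real"
  assumes g: "locally_integrable g" and H: "H \<in> borel_measurable lborel"
    and incr: "\<And>a b. a \<le> b \<Longrightarrow> H b - H a = (\<integral>t. g t * indicator {a..<b} t \<partial>lborel)"
  shows "integrable lborel (\<lambda>t. g t * indicator {x..<y} t * H t)"
proof -
  define gI where "gI t = g t * indicator {x..<y} t" for t
  have gI: "integrable lborel gI"
    unfolding gI_def by (rule integrable_mult_indicator_interval[OF g])
  have "\<bar>H t * indicator {x..<y} t\<bar> \<le> \<bar>H x\<bar> + (\<integral>s. \<bar>gI s\<bar> \<partial>lborel)" for t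
  proof (cases "t \<in> {x..<y}")
    case True
    then have "gI s * indicator {..<t} s = g s * indicator {x..<t} s" for s
      by (auto simp: gI_def indicator_def)
    with True have "\<bar>H t - H x\<bar> = \<bar>\<integral>s. gI s * indicator {..<t} s \<partial>lborel\<bar>"
      using incr[of x t] by simp
    also have "\<dots> \<le> (\<integral>s. \<bar>gI s\<bar> \<partial>lborel)"
      using gI by (intro integral_abs_bound_integral integrable_mult_bounded) (auto simp: indicator_def)
    finally show ?thesis using True by simp
  qed simp
  then have "integrable lborel (\<lambda>t. gI t * (H t * indicator {x..<y} t))"
    using H by (intro integrable_mult_bounded[OF gI]) auto
  moreover have "gI t * (H t * indicator {x..<y} t) = g t * indicator {x..<y} t * H t" for t
    by (simp add: gI_def indicator_def)
  ultimately show ?thesis by simp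
qed

text \<open>Computing the integral of g(s) g(t) over the triangle x \<le> s < t < y in both orders
  gives the product rule for the square of H.\<close>
lemma square_increment_eq_integral:
  fixes H g :: "real \<Rightarrow> real"
  assumes g: "locally_integrable g" and H: "H \<in> borel_measurable lborel"
    and incr: "\<And>a b. a \<le> b \<Longrightarrow> H b - H a = (\<integral>t. g t * indicator {a..<b} t \<partial>lborel)"
    and xy: "x \<le> y"
  shows "(\<integral>t. 2 * H t * g t * indicator {x..<y} t \<partial>lborel) = (H y)\<^sup>2 - (H x)\<^sup>2"
proof -
  define gI where "gI t = g t * indicator {x..<y} t" for t
  define P where "P = (\<integral>t. gI t * H t \<partial>lborel)"
  have gI: "integrable lborel gI"
    unfolding gI_def by (rule integrable_mult_indicator_interval[OF g])
  have gIH: "integrable lborel (\<lambda>t. gI t * H t)"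
    unfolding gI_def using g H incr by (rule integrable_mult_increment_function)
  have [measurable]: "g \<in> borel_measurable borel" "H \<in> borel_measurable borel" "gI \<in> borel_measurable borel"
    using g H gI by (auto simp: locally_integrable_def)
  have D: "(\<integral>t. gI t \<partial>lborel) = H y - H x" using incr[OF xy] by (simp add: gI_def)
  have "(\<integral>t. (\<integral>s. gI t * gI s * indicator {..<t} s \<partial>lborel) \<partial>lborel)
      = (\<integral>s. (\<integral>t. gI t * gI s * indicator {..<t} s \<partial>lborel) \<partial>lborel)"
    by (rule integral_swap_bounded_kernel[OF gI gI]) (auto simp: indicator_def)
  moreover have "(\<integral>s. gI t * gI s * indicator {..<t} s \<partial>lborel) = gI t * H t - H x * gI t" for t
  proof (cases "t \<in> {x..<y}")
    case True
    then have "gI s * indicator {..<t} s = g s * indicator {x..<t} s" for s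
      by (auto simp: gI_def indicator_def)
    with True have "(\<integral>s. gI t * gI s * indicator {..<t} s \<partial>lborel) = gI t * (H t - H x)"
      by (simp add: mult.assoc incr[of x t, symmetric])
    then show ?thesis by (simp add: algebra_simps)
  qed (simp add: gI_def)
  moreover have "(\<integral>t. gI t * gI s * indicator {..<t} s \<partial>lborel) = H y * gI s - gI s * H s" for s
  proof (cases "s \<in> {x..<y}")
    case True
    have swap: "gI t * gI s * indicator {..<t} s = gI s * (gI t * indicator {s<..} t)" for t
      by (simp add: indicator_def)
    have "AE t in lborel. gI t * indicator {s<..} t = g t * indicator {s..<y} t"
      using AE_lborel_singleton[of s] by eventually_elim (use True in \<open>auto simp: gI_def indicator_def\<close>)
    then have "(\<integral>t. gI t * indicator {s<..} t \<partial>lborel) = H y - H s"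
      using incr[of s y] True by (subst integral_cong_AE) auto
    then show ?thesis by (simp only: swap integral_mult_right_zero) (simp add: algebra_simps)
  qed (simp add: gI_def)
  ultimately have "P - H x * (H y - H x) = H y * (H y - H x) - P"
    using gI gIH D by (simp add: P_def)
  then have "2 * P = (H y)\<^sup>2 - (H x)\<^sup>2" by (simp add: power2_eq_square algebra_simps)
  moreover have "(\<integral>t. 2 * H t * g t * indicator {x..<y} t \<partial>lborel) = (\<integral>t. 2 * (gI t * H t) \<partial>lborel)"
    by (intro Bochner_Integration.integral_cong) (simp_all add: gI_def mult_ac)
  ultimately show ?thesis by (simp add: P_def)
qed

section \<open>Exponential weights\<close>

lemma has_bochner_integral_exp_abs_atLeast:
  fixes c s :: real
  assumes "c > 0" "s \<ge> 0"
  shows "has_bochner_integral lborel (\<lambda>x. exp (- c * \<bar>x\<bar>) * indicator {s..} x) (exp (- c * s) / c)"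
proof (rule has_bochner_integral_nn_integral)
  have "((\<lambda>x. exp (- c * x)) has_integral exp (- c * s) / c) {s..}"
    using assms(1) by (rule has_integral_exp_minus_to_infinity)
  then have "((\<lambda>x. if x \<in> {s..} then exp (- c * x) else 0) has_integral exp (- c * s) / c) UNIV"
    by (simp only: has_integral_restrict_UNIV)
  moreover have "(\<lambda>x. if x \<in> {s..} then exp (- c * x) else 0) = (\<lambda>x. exp (- c * \<bar>x\<bar>) * indicator {s..} x)"
    using assms(2) by (auto simp: fun_eq_iff indicator_def)
  ultimately have "((\<lambda>x. exp (- c * \<bar>x\<bar>) * indicator {s..} x) has_integral exp (- c * s) / c) UNIV"
    by simp
  then show "(\<integral>\<^sup>+x. ennreal (exp (- c * \<bar>x\<bar>) * indicator {s..} x) \<partial>lborel) = ennreal (exp (- c * s) / c)"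
    by (intro nn_integral_has_integral_lborel) auto
qed (use assms in auto)

lemma has_bochner_integral_exp_abs_greaterThan:
  fixes c s :: real
  assumes "c > 0" "s \<ge> 0"
  shows "has_bochner_integral lborel (\<lambda>x. exp (- c * \<bar>x\<bar>) * indicator {s<..} x) (exp (- c * s) / c)"
  using has_bochner_integral_exp_abs_atLeast[OF assms]
  by (rule has_bochner_integral_discrete_difference[where X = "{s}", THEN iffD1, rotated 4])
    (auto simp: indicator_def)

lemma has_bochner_integral_exp_abs_atMost:
  fixes c s :: real
  assumes "c > 0" "s \<le> 0"
  shows "has_bochner_integral lborel (\<lambda>x. exp (- c * \<bar>x\<bar>) * indicator {..s} x) (exp (c * s) / c)"
proof -
  have "has_bochner_integral lborel (\<lambda>x. exp (- c * \<bar>x\<bar>) * indicator {- s..} x) (exp (c * s) / c)"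
    using has_bochner_integral_exp_abs_atLeast[of c "- s"] assms by simp
  moreover have "(\<lambda>x. exp (- c * \<bar>x\<bar>) * indicator {- s..} x)
      = (\<lambda>x. exp (- c * \<bar>0 + - 1 * x\<bar>) * indicator {..s} (0 + - 1 * x))"
    by (auto simp: fun_eq_iff indicator_def)
  ultimately show ?thesis
    by (subst lborel_has_bochner_integral_real_affine_iff[where c = "- 1" and t = 0]) auto
qed

lemma has_bochner_integral_exp_abs:
  fixes c :: real
  assumes "c > 0"
  shows "has_bochner_integral lborel (\<lambda>x. exp (- c * \<bar>x\<bar>)) (2 / c)"
  using has_bochner_integral_even_function[of "\<lambda>x. exp (- c * \<bar>x\<bar>)" "1 / c"]
    has_bochner_integral_exp_abs_atLeast[OF assms order.refl]
  by (simp add: mult.commute)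

lemma integrable_exp_abs: "(c :: real) > 0 \<Longrightarrow> integrable lborel (\<lambda>x :: real. exp (- c * \<bar>x\<bar>))"
  using has_bochner_integral_exp_abs has_bochner_integral_iff by blast

lemma integral_exp_abs: "(c :: real) > 0 \<Longrightarrow> (\<integral>x. exp (- c * \<bar>x :: real\<bar>) \<partial>lborel) = 2 / c"
  using has_bochner_integral_exp_abs has_bochner_integral_iff by blast

definition interval_from_0 :: "real \<Rightarrow> real set" where
  "interval_from_0 x = (if 0 \<le> x then {0..<x} else {x..<0})"

lemma indicator_interval_from_0:
  "indicator (interval_from_0 x) t = (if 0 \<le> t \<and> t < x \<or> x \<le> t \<and> t < 0 then 1 else (0 :: real))"
  by (auto simp: interval_from_0_def indicator_def)

lemma measurable_indicator_interval_from_0 [measurable]: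
  "(\<lambda>(x, t). indicator (interval_from_0 x) t :: real) \<in> borel_measurable (lborel \<Otimes>\<^sub>M lborel)"
  unfolding indicator_interval_from_0 by measurable

lemma integral_exp_abs_indicator_interval_from_0:
  fixes c t :: real
  assumes c: "c > 0"
  shows "(\<integral>x. exp (- c * \<bar>x\<bar>) * indicator (interval_from_0 x) t \<partial>lborel) = exp (- c * \<bar>t\<bar>) / c"
proof (cases "t \<ge> 0")
  case True
  then have "indicator (interval_from_0 x) t = (indicator {t<..} x :: real)" for x
    unfolding indicator_interval_from_0 by (auto simp: indicator_def)
  then have "(\<integral>x. exp (- c * \<bar>x\<bar>) * indicator (interval_from_0 x) t \<partial>lborel)
      = (\<integral>x. exp (- c * \<bar>x\<bar>) * indicator {t<..} x \<partial>lborel)"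
    by simp
  also have "\<dots> = exp (- c * t) / c"
    by (rule has_bochner_integral_integral_eq[OF has_bochner_integral_exp_abs_greaterThan[OF c True]])
  finally show ?thesis using True by simp
next
  case False
  then have "indicator (interval_from_0 x) t = (indicator {..t} x :: real)" for x
    unfolding indicator_interval_from_0 by (auto simp: indicator_def)
  then have "(\<integral>x. exp (- c * \<bar>x\<bar>) * indicator (interval_from_0 x) t \<partial>lborel)
      = (\<integral>x. exp (- c * \<bar>x\<bar>) * indicator {..t} x \<partial>lborel)"
    by simp
  also have "\<dots> = exp (c * t) / c"
    using False by (intro has_bochner_integral_integral_eq has_bochner_integral_exp_abs_atMost c) simp
  finally show ?thesis using False by simp
qed

definition mass_from_0 :: "(real \<Rightarrow> real) \<Rightarrow> real \<Rightarrow> real" where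
  "mass_from_0 G x = (\<integral>t. G t * indicator (interval_from_0 x) t \<partial>lborel)"

lemma borel_measurable_mass_from_0 [measurable]:
  assumes [measurable]: "G \<in> borel_measurable borel"
  shows "mass_from_0 G \<in> borel_measurable borel"
  unfolding mass_from_0_def[abs_def] by measurable

lemma mass_from_0_nonneg: "integrable lborel G \<Longrightarrow> (\<And>t. 0 \<le> G t) \<Longrightarrow> 0 \<le> mass_from_0 G x"
  unfolding mass_from_0_def by (intro integral_nonneg_AE AE_I2) simp

lemma mass_from_0_le:
  assumes "integrable lborel G" "\<And>t. 0 \<le> G t"
  shows "mass_from_0 G x \<le> (\<integral>t. G t \<partial>lborel)"
  unfolding mass_from_0_def
proof (rule integral_mono)
  show "integrable lborel (\<lambda>t. G t * indicator (interval_from_0 x) t)"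
    using assms(1) by (rule integrable_mult_bounded) auto
  show "G t * indicator (interval_from_0 x) t \<le> G t" for t
    using assms(2)[of t] by (simp add: indicator_def)
qed (use assms in auto)

lemma integral_exp_abs_mult_mass_from_0:
  fixes G :: "real \<Rightarrow> real" and c :: real
  assumes c: "c > 0" and G: "integrable lborel G"
  shows "(\<integral>x. exp (- c * \<bar>x\<bar>) * mass_from_0 G x \<partial>lborel) = (\<integral>t. G t * exp (- c * \<bar>t\<bar>) \<partial>lborel) / c"
proof -
  have "(\<integral>x. exp (- c * \<bar>x\<bar>) * mass_from_0 G x \<partial>lborel)
      = (\<integral>x. (\<integral>t. exp (- c * \<bar>x\<bar>) * G t * indicator (interval_from_0 x) t \<partial>lborel) \<partial>lborel)"
    by (simp add: mass_from_0_def mult.assoc)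
  also have "\<dots> = (\<integral>t. (\<integral>x. exp (- c * \<bar>x\<bar>) * G t * indicator (interval_from_0 x) t \<partial>lborel) \<partial>lborel)"
    by (rule integral_swap_bounded_kernel[OF integrable_exp_abs[OF c] G measurable_indicator_interval_from_0])
      simp
  also have "\<dots> = (\<integral>t. G t * (\<integral>x. exp (- c * \<bar>x\<bar>) * indicator (interval_from_0 x) t \<partial>lborel) \<partial>lborel)"
  proof -
    have "exp (- c * \<bar>x\<bar>) * G t * indicator (interval_from_0 x) t
        = G t * (exp (- c * \<bar>x\<bar>) * indicator (interval_from_0 x) t)" for x t
      by simp
    then show ?thesis by (simp only: integral_mult_right_zero)
  qed
  also have "\<dots> = (\<integral>t. G t * exp (- c * \<bar>t\<bar>) / c \<partial>lborel)"
    by (simp only: integral_exp_abs_indicator_interval_from_0[OF c] times_divide_eq_right)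
  finally show ?thesis by simp
qed

section \<open>The weighted estimate\<close>

lemma integral_mult_le_oscillation_bound:
  fixes Y F S :: "real \<Rightarrow> real"
  assumes Y: "integrable lborel Y" and YF: "integrable lborel (\<lambda>y. Y y * F y)"
    and YS: "integrable lborel (\<lambda>y. \<bar>Y y\<bar> * S y)"
    and osc: "\<And>y. \<bar>F x - F y\<bar> \<le> S x + S y"
  shows "(\<integral>y. Y y \<partial>lborel) * F x
    \<le> (\<integral>y. Y y * F y \<partial>lborel) + (\<integral>y. \<bar>Y y\<bar> \<partial>lborel) * S x + (\<integral>y. \<bar>Y y\<bar> * S y \<partial>lborel)"
proof -
  have "(\<integral>y. Y y \<partial>lborel) * F x - (\<integral>y. Y y * F y \<partial>lborel) = (\<integral>y. Y y * (F x - F y) \<partial>lborel)"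
    using Y YF by (simp add: right_diff_distrib)
  also have "\<dots> \<le> (\<integral>y. \<bar>Y y\<bar> * S x + \<bar>Y y\<bar> * S y \<partial>lborel)"
  proof (rule integral_mono)
    show "integrable lborel (\<lambda>y. Y y * (F x - F y))"
      using Y YF by (simp add: right_diff_distrib)
    show "integrable lborel (\<lambda>y. \<bar>Y y\<bar> * S x + \<bar>Y y\<bar> * S y)"
      using Y YS by simp
    fix y
    have "Y y * (F x - F y) \<le> \<bar>Y y\<bar> * \<bar>F x - F y\<bar>"
      by (simp add: abs_mult[symmetric])
    also have "\<dots> \<le> \<bar>Y y\<bar> * (S x + S y)"
      using osc by (intro mult_left_mono) auto
    finally show "Y y * (F x - F y) \<le> \<bar>Y y\<bar> * S x + \<bar>Y y\<bar> * S y"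
      by (simp add: distrib_left)
  qed
  also have "\<dots> = (\<integral>y. \<bar>Y y\<bar> \<partial>lborel) * S x + (\<integral>y. \<bar>Y y\<bar> * S y \<partial>lborel)"
    using Y YS by simp
  finally show ?thesis by simp
qed

lemma integrable_dominated_by_exp_abs:
  fixes Y :: "real \<Rightarrow> real"
  assumes "Y \<in> borel_measurable lborel" "\<And>x. \<bar>Y x\<bar> \<le> exp (- \<bar>x\<bar>)"
  shows "integrable lborel Y"
proof (rule Bochner_Integration.integrable_bound[OF _ assms(1)])
  show "integrable lborel (\<lambda>x :: real. exp (- \<bar>x\<bar>))" using integrable_exp_abs[of 1] by simp
  show "AE x in lborel. norm (Y x) \<le> norm (exp (- \<bar>x\<bar>))"
    using assms(2) by (intro AE_I2) simp
qed

lemma integral_abs_mult_mass_from_0_le: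
  fixes c :: real and Y G :: "real \<Rightarrow> real"
  assumes c: "0 < c" "c \<le> 1"
    and Y: "Y \<in> borel_measurable lborel" "\<And>x. \<bar>Y x\<bar> \<le> exp (- \<bar>x\<bar>)"
    and G: "integrable lborel G" "\<And>t. 0 \<le> G t"
  shows "(\<integral>x. \<bar>Y x\<bar> * mass_from_0 G x \<partial>lborel) \<le> (\<integral>t. G t * exp (- c * \<bar>t\<bar>) \<partial>lborel)"
proof -
  have [measurable]: "G \<in> borel_measurable borel" using G by auto
  have m: "0 \<le> mass_from_0 G x" "\<bar>mass_from_0 G x\<bar> \<le> (\<integral>t. G t \<partial>lborel)" for x
    using mass_from_0_nonneg[OF G] mass_from_0_le[OF G] by auto
  have exp_le: "exp (- 1 * \<bar>x\<bar>) \<le> exp (- c * \<bar>x\<bar>)" for x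
    using c mult_right_mono[of c 1 "\<bar>x\<bar>"] by simp
  have "(\<integral>x. \<bar>Y x\<bar> * mass_from_0 G x \<partial>lborel) \<le> (\<integral>x. exp (- 1 * \<bar>x\<bar>) * mass_from_0 G x \<partial>lborel)"
  proof (rule integral_mono)
    show "integrable lborel (\<lambda>x. \<bar>Y x\<bar> * mass_from_0 G x)"
      using integrable_abs[OF integrable_dominated_by_exp_abs[OF Y]]
      by (rule integrable_mult_bounded) (use m in auto)
    show "integrable lborel (\<lambda>x. exp (- 1 * \<bar>x\<bar>) * mass_from_0 G x)"
      using integrable_exp_abs[of 1] by (rule integrable_mult_bounded) (use m in auto)
    show "\<bar>Y x\<bar> * mass_from_0 G x \<le> exp (- 1 * \<bar>x\<bar>) * mass_from_0 G x" for x
      using Y(2) m(1) by (intro mult_right_mono) auto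
  qed
  also have "\<dots> = (\<integral>t. G t * exp (- 1 * \<bar>t\<bar>) \<partial>lborel)"
    using integral_exp_abs_mult_mass_from_0[OF _ G(1), of 1] by simp
  also have "\<dots> \<le> (\<integral>t. G t * exp (- c * \<bar>t\<bar>) \<partial>lborel)"
  proof (rule integral_mono)
    show "integrable lborel (\<lambda>t. G t * exp (- 1 * \<bar>t\<bar>))" "integrable lborel (\<lambda>t. G t * exp (- c * \<bar>t\<bar>))"
      using G(1) c by (auto intro!: integrable_mult_bounded[where C = 1] simp del: mult_minus_left)
    show "G t * exp (- 1 * \<bar>t\<bar>) \<le> G t * exp (- c * \<bar>t\<bar>)" for t
      using exp_le G(2) by (rule mult_left_mono)
  qed
  finally show ?thesis .
qed

lemma integral_mult_value_le_mass_from_0: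
  fixes c :: real and Y F G :: "real \<Rightarrow> real"
  assumes c: "0 < c" "c \<le> 1"
    and Y: "Y \<in> borel_measurable lborel" "\<And>x. \<bar>Y x\<bar> \<le> exp (- \<bar>x\<bar>)"
    and F: "integrable lborel F"
    and G: "integrable lborel G" "\<And>t. 0 \<le> G t"
    and osc: "\<And>x. \<bar>F x - F 0\<bar> \<le> mass_from_0 G x"
  shows "(\<integral>y. Y y \<partial>lborel) * F x
    \<le> (\<integral>y. Y y * F y \<partial>lborel) + 2 * mass_from_0 G x + (\<integral>t. G t * exp (- c * \<bar>t\<bar>) \<partial>lborel)"
proof -
  have [measurable]: "G \<in> borel_measurable borel" using G by auto
  have Yi: "integrable lborel Y" using Y by (rule integrable_dominated_by_exp_abs)
  have Y1: "\<bar>Y y\<bar> \<le> 1" for y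
    using Y(2)[of y] by (simp add: order_trans[OF _ exp_le_one_iff[THEN iffD2]])
  have "(\<integral>y. Y y \<partial>lborel) * F x
      \<le> (\<integral>y. Y y * F y \<partial>lborel) + (\<integral>y. \<bar>Y y\<bar> \<partial>lborel) * mass_from_0 G x
        + (\<integral>y. \<bar>Y y\<bar> * mass_from_0 G y \<partial>lborel)"
  proof (rule integral_mult_le_oscillation_bound[OF Yi])
    have "integrable lborel (\<lambda>y. F y * Y y)"
      using F Y(1) Y1 by (rule integrable_mult_bounded)
    then show "integrable lborel (\<lambda>y. Y y * F y)" by (simp add: mult.commute)
    show "integrable lborel (\<lambda>y. \<bar>Y y\<bar> * mass_from_0 G y)"
      using integrable_abs[OF Yi] by (rule integrable_mult_bounded)
        (use mass_from_0_nonneg[OF G] mass_from_0_le[OF G] in auto)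
    show "\<bar>F x - F y\<bar> \<le> mass_from_0 G x + mass_from_0 G y" for y
      using osc[of x] osc[of y] by linarith
  qed
  moreover have "(\<integral>y. \<bar>Y y\<bar> \<partial>lborel) \<le> 2"
  proof -
    have "(\<integral>y. \<bar>Y y\<bar> \<partial>lborel) \<le> (\<integral>y. exp (- 1 * \<bar>y\<bar>) \<partial>lborel)"
      using Yi integrable_exp_abs[of 1] Y(2) by (intro integral_mono) auto
    then show ?thesis using integral_exp_abs[of 1] by simp
  qed
  then have "(\<integral>y. \<bar>Y y\<bar> \<partial>lborel) * mass_from_0 G x \<le> 2 * mass_from_0 G x"
    using mass_from_0_nonneg[OF G] by (rule mult_right_mono)
  ultimately show ?thesis
    using integral_abs_mult_mass_from_0_le[OF c Y G] by linarith
qed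

lemma exp_weighted_integral_le_mass_from_0:
  fixes c :: real and Y F G :: "real \<Rightarrow> real"
  assumes c: "0 < c" "c \<le> 1"
    and Y: "Y \<in> borel_measurable lborel" "\<And>x. \<bar>Y x\<bar> \<le> exp (- \<bar>x\<bar>)"
    and F: "integrable lborel F"
    and G: "integrable lborel G" "\<And>t. 0 \<le> G t"
    and osc: "\<And>x. \<bar>F x - F 0\<bar> \<le> mass_from_0 G x"
  shows "(\<integral>x. Y x \<partial>lborel) * (\<integral>x. exp (- c * \<bar>x\<bar>) * F x \<partial>lborel)
    \<le> 2 / c * (\<integral>x. Y x * F x \<partial>lborel) + 4 / c * (\<integral>t. G t * exp (- c * \<bar>t\<bar>) \<partial>lborel)"
proof -
  define E where "E x = exp (- c * \<bar>x\<bar>)" for x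
  define I where "I = (\<integral>x. Y x \<partial>lborel)"
  define J where "J = (\<integral>x. Y x * F x \<partial>lborel)"
  define GE where "GE = (\<integral>t. G t * E t \<partial>lborel)"
  have [measurable]: "G \<in> borel_measurable borel" using G by auto
  have E: "0 \<le> E x" "\<bar>E x\<bar> \<le> 1" for x
    using c by (auto simp: E_def)
  have Ei: "integrable lborel E"
    unfolding E_def[abs_def] using c(1) by (rule integrable_exp_abs)
  have EFi: "integrable lborel (\<lambda>x. E x * F x)"
    using integrable_mult_bounded[OF F _ E(2)] by (simp add: E_def mult.commute)
  have EMi: "integrable lborel (\<lambda>x. E x * mass_from_0 G x)"
    using Ei by (rule integrable_mult_bounded) (use mass_from_0_nonneg[OF G] mass_from_0_le[OF G] in auto)
  have "I * (\<integral>x. E x * F x \<partial>lborel) = (\<integral>x. E x * (I * F x) \<partial>lborel)"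
    by (simp add: mult.left_commute)
  also have "\<dots> \<le> (\<integral>x. E x * J + 2 * (E x * mass_from_0 G x) + E x * GE \<partial>lborel)"
  proof (rule integral_mono)
    show "integrable lborel (\<lambda>x. E x * (I * F x))"
      using integrable_mult_right[OF EFi, of I] by (simp add: mult.left_commute)
    show "integrable lborel (\<lambda>x. E x * J + 2 * (E x * mass_from_0 G x) + E x * GE)"
      using Ei EMi by simp
    show "E x * (I * F x) \<le> E x * J + 2 * (E x * mass_from_0 G x) + E x * GE" for x
      using mult_left_mono[OF integral_mult_value_le_mass_from_0[OF c Y F G osc, of x] E(1)]
      by (simp add: I_def J_def GE_def E_def algebra_simps)
  qed
  also have "\<dots> = 2 / c * J + 2 * (GE / c) + 2 / c * GE"
    using Ei EMi integral_exp_abs_mult_mass_from_0[OF c(1) G(1)] integral_exp_abs[OF c(1)]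
    by (simp add: E_def[abs_def] GE_def mult.commute)
  finally show ?thesis by (simp add: I_def J_def GE_def E_def add_divide_distrib)
qed

lemma abs_square_diff_le_mass_from_0:
  fixes H g :: "real \<Rightarrow> real"
  assumes g: "locally_integrable g" and H: "H \<in> borel_measurable lborel"
    and incr: "\<And>a b. a \<le> b \<Longrightarrow> H b - H a = (\<integral>t. g t * indicator {a..<b} t \<partial>lborel)"
    and Hg: "integrable lborel (\<lambda>t. H t * g t)"
  shows "\<bar>(H x)\<^sup>2 - (H 0)\<^sup>2\<bar> \<le> mass_from_0 (\<lambda>t. 2 * \<bar>H t * g t\<bar>) x"
proof -
  have "\<bar>(H x)\<^sup>2 - (H 0)\<^sup>2\<bar> = \<bar>\<integral>t. 2 * (H t * g t) * indicator (interval_from_0 x) t \<partial>lborel\<bar>"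
    using square_increment_eq_integral[OF g H incr, of 0 x] square_increment_eq_integral[OF g H incr, of x 0]
    by (cases "0 \<le> x") (simp_all add: interval_from_0_def abs_minus_commute mult.assoc)
  also have "\<dots> \<le> mass_from_0 (\<lambda>t. 2 * \<bar>H t * g t\<bar>) x"
    unfolding mass_from_0_def
  proof (rule integral_abs_bound_integral)
    show "integrable lborel (\<lambda>t. 2 * (H t * g t) * indicator (interval_from_0 x) t)"
      using integrable_mult_right[OF Hg, of 2] by (rule integrable_mult_bounded) auto
    show "integrable lborel (\<lambda>t. 2 * \<bar>H t * g t\<bar> * indicator (interval_from_0 x) t)"
      using integrable_mult_right[OF integrable_abs[OF Hg], of 2] by (rule integrable_mult_bounded) auto
    show "\<bar>2 * (H t * g t) * indicator (interval_from_0 x) t\<bar> \<le> 2 * \<bar>H t * g t\<bar> * indicator (interval_from_0 x) t"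
      for t by (simp add: abs_mult indicator_def)
  qed
  finally show ?thesis .
qed

lemma young_inequality_weighted:
  fixes a b c e I :: real
  assumes "0 \<le> e" "e \<le> 1" "0 < c" "0 < I"
  shows "4 / c * (2 * \<bar>a * b\<bar> * e) \<le> I / 2 * (e * a\<^sup>2) + 32 / (c\<^sup>2 * I) * b\<^sup>2"
proof -
  have "I / 2 * (e * \<bar>a\<bar>\<^sup>2) + 32 / (c\<^sup>2 * I) * \<bar>b\<bar>\<^sup>2 - 4 / c * (2 * \<bar>a\<bar> * \<bar>b\<bar> * e)
      = e * (I / 2) * (\<bar>a\<bar> - 8 * \<bar>b\<bar> / (c * I))\<^sup>2 + 32 / (c\<^sup>2 * I) * \<bar>b\<bar>\<^sup>2 * (1 - e)"
    using assms by (simp add: field_simps power2_eq_square)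
  moreover have "0 \<le> e * (I / 2) * (\<bar>a\<bar> - 8 * \<bar>b\<bar> / (c * I))\<^sup>2 + 32 / (c\<^sup>2 * I) * \<bar>b\<bar>\<^sup>2 * (1 - e)"
    using assms by simp
  ultimately show ?thesis by (simp add: abs_mult)
qed

lemma integrable_mult_square_integrable:
  fixes f g :: "'a \<Rightarrow> real"
  assumes "f \<in> borel_measurable M" "integrable M (\<lambda>x. (f x)\<^sup>2)"
    and "g \<in> borel_measurable M" "integrable M (\<lambda>x. (g x)\<^sup>2)"
  shows "integrable M (\<lambda>x. f x * g x)"
proof (rule Bochner_Integration.integrable_bound)
  show "integrable M (\<lambda>x. (f x)\<^sup>2 + (g x)\<^sup>2)" using assms(2,4) by simp
  show "(\<lambda>x. f x * g x) \<in> borel_measurable M" using assms(1,3) by measurable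
  have "\<bar>f x * g x\<bar> \<le> (f x)\<^sup>2 + (g x)\<^sup>2" for x
  proof -
    have "2 * (\<bar>f x\<bar> * \<bar>g x\<bar>) \<le> (f x)\<^sup>2 + (g x)\<^sup>2"
      using sum_squares_bound[of "\<bar>f x\<bar>" "\<bar>g x\<bar>"] by (simp add: mult.assoc)
    moreover have "0 \<le> \<bar>f x\<bar> * \<bar>g x\<bar>" by simp
    ultimately have "\<bar>f x\<bar> * \<bar>g x\<bar> \<le> (f x)\<^sup>2 + (g x)\<^sup>2" by linarith
    then show ?thesis by (simp add: abs_mult)
  qed
  then show "AE x in M. norm (f x * g x) \<le> norm ((f x)\<^sup>2 + (g x)\<^sup>2)"
    by (intro AE_I2) simp
qed

lemma integral_young_exp_weighted:
  fixes c I :: real and H g :: "real \<Rightarrow> real"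
  assumes c: "0 < c" and I: "0 < I"
    and H: "H \<in> borel_measurable lborel" "integrable lborel (\<lambda>x. (H x)\<^sup>2)"
    and g: "g \<in> borel_measurable lborel" "integrable lborel (\<lambda>x. (g x)\<^sup>2)"
  shows "4 / c * (\<integral>t. 2 * \<bar>H t * g t\<bar> * exp (- c * \<bar>t\<bar>) \<partial>lborel)
    \<le> I / 2 * (\<integral>t. exp (- c * \<bar>t\<bar>) * (H t)\<^sup>2 \<partial>lborel) + 32 / (c\<^sup>2 * I) * (\<integral>t. (g t)\<^sup>2 \<partial>lborel)"
proof -
  have EH: "integrable lborel (\<lambda>t. exp (- c * \<bar>t\<bar>) * (H t)\<^sup>2)"
    using integrable_mult_bounded[OF H(2), of "\<lambda>t. exp (- c * \<bar>t\<bar>)" 1] c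
    by (simp add: mult.commute)
  have GE: "integrable lborel (\<lambda>t. 2 * \<bar>H t * g t\<bar> * exp (- c * \<bar>t\<bar>))"
    using integrable_mult_right[OF integrable_abs[OF integrable_mult_square_integrable[OF H g]], of 2]
    by (rule integrable_mult_bounded[where C = 1]) (use c in auto)
  note GE4 = integrable_mult_right[OF GE, of "4 / c"]
  have "4 / c * (\<integral>t. 2 * \<bar>H t * g t\<bar> * exp (- c * \<bar>t\<bar>) \<partial>lborel)
      \<le> (\<integral>t. I / 2 * (exp (- c * \<bar>t\<bar>) * (H t)\<^sup>2) + 32 / (c\<^sup>2 * I) * (g t)\<^sup>2 \<partial>lborel)"
    unfolding integral_mult_right_zero[symmetric]
  proof (rule integral_mono)
    show "4 / c * (2 * \<bar>H t * g t\<bar> * exp (- c * \<bar>t\<bar>))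
        \<le> I / 2 * (exp (- c * \<bar>t\<bar>) * (H t)\<^sup>2) + 32 / (c\<^sup>2 * I) * (g t)\<^sup>2" for t
      using young_inequality_weighted[of "exp (- c * \<bar>t\<bar>)" c I "H t" "g t"] c I
      by (simp add: mult.assoc)
  qed (use GE4 EH g(2) in auto)
  also have "\<dots> = I / 2 * (\<integral>t. exp (- c * \<bar>t\<bar>) * (H t)\<^sup>2 \<partial>lborel) + 32 / (c\<^sup>2 * I) * (\<integral>t. (g t)\<^sup>2 \<partial>lborel)"
    using EH g(2) by simp
  finally show ?thesis .
qed

lemma exp_weighted_square_le:
  fixes c :: real and Y H g :: "real \<Rightarrow> real"
  assumes c: "0 < c" "c \<le> 1"
    and Y: "Y \<in> borel_measurable lborel" "\<And>x. \<bar>Y x\<bar> \<le> exp (- \<bar>x\<bar>)" "(\<integral>x. Y x \<partial>lborel) > 0"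
    and H: "H \<in> borel_measurable lborel" "integrable lborel (\<lambda>x. (H x)\<^sup>2)"
    and g: "g \<in> borel_measurable lborel" "integrable lborel (\<lambda>x. (g x)\<^sup>2)"
    and incr: "\<And>a b. a \<le> b \<Longrightarrow> H b - H a = (\<integral>t. g t * indicator {a..<b} t \<partial>lborel)"
  shows "(\<integral>x. exp (- c * \<bar>x\<bar>) * (H x)\<^sup>2 \<partial>lborel)
    \<le> 4 / (c * (\<integral>x. Y x \<partial>lborel)) * (\<integral>x. Y x * (H x)\<^sup>2 \<partial>lborel)
      + 64 / (c\<^sup>2 * (\<integral>x. Y x \<partial>lborel)\<^sup>2) * (\<integral>x. (g x)\<^sup>2 \<partial>lborel)"
proof -
  define I where "I = (\<integral>x. Y x \<partial>lborel)"
  define A where "A = (\<integral>x. exp (- c * \<bar>x\<bar>) * (H x)\<^sup>2 \<partial>lborel)"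
  define J where "J = (\<integral>x. Y x * (H x)\<^sup>2 \<partial>lborel)"
  define B where "B = (\<integral>x. (g x)\<^sup>2 \<partial>lborel)"
  have I: "I > 0" using Y(3) by (simp add: I_def)
  have Hg: "integrable lborel (\<lambda>t. H t * g t)"
    using H g by (rule integrable_mult_square_integrable)
  have "I * A \<le> 2 / c * J + 4 / c * (\<integral>t. 2 * \<bar>H t * g t\<bar> * exp (- c * \<bar>t\<bar>) \<partial>lborel)"
    unfolding I_def A_def J_def
  proof (rule exp_weighted_integral_le_mass_from_0[OF c Y(1,2) H(2)])
    show "integrable lborel (\<lambda>t. 2 * \<bar>H t * g t\<bar>)" using integrable_abs[OF Hg] by simp
    show "\<bar>(H x)\<^sup>2 - (H 0)\<^sup>2\<bar> \<le> mass_from_0 (\<lambda>t. 2 * \<bar>H t * g t\<bar>) x" for x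
      using square_integrable_imp_locally_integrable[OF g] H(1) incr Hg
      by (rule abs_square_diff_le_mass_from_0)
  qed simp
  also have "\<dots> \<le> 2 / c * J + (I / 2 * A + 32 / (c\<^sup>2 * I) * B)"
    unfolding A_def B_def using integral_young_exp_weighted[OF c(1) I H g] by simp
  finally have "I / 2 * A \<le> 2 / c * J + 32 / (c\<^sup>2 * I) * B" by simp
  then have "2 / I * (I / 2 * A) \<le> 2 / I * (2 / c * J + 32 / (c\<^sup>2 * I) * B)"
    using I by (intro mult_left_mono) auto
  with I c show ?thesis
    by (simp add: A_def I_def J_def B_def field_simps power2_eq_square)
qed

theorem lemma5:
  fixes c :: real and Y h h' :: "real \<Rightarrow> real"
  assumes "0 < c" and "c < 1"
    and "Y \<in> borel_measurable lborel"
    and "\<forall>x. \<bar>Y x\<bar> \<le> exp (- \<bar>x\<bar>)"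
    and "(\<integral>x. Y x \<partial>lborel) > 0"
    and "H1_weak_deriv h h'"
  shows "(\<integral>x. exp (- c * \<bar>x\<bar>) * (h x)\<^sup>2 \<partial>lborel)
         \<le> 4 / (c * (\<integral>x. Y x \<partial>lborel)) * (\<integral>x. Y x * (h x)\<^sup>2 \<partial>lborel)
           + 64 / (c\<^sup>2 * (\<integral>x. Y x \<partial>lborel)\<^sup>2) * (\<integral>x. (h' x)\<^sup>2 \<partial>lborel)"
proof (rule H1_weak_deriv_representative[OF assms(6)])
  fix H assume H [measurable]: "H \<in> borel_measurable borel" and ae: "AE x in lborel. h x = H x"
    and incr: "\<And>a b. a \<le> b \<Longrightarrow> H b - H a = (\<integral>t. h' t * indicator {a..<b} t \<partial>lborel)"
  have [measurable]: "h \<in> borel_measurable borel" "Y \<in> borel_measurable borel"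
    and h2: "integrable lborel (\<lambda>x. (h x)\<^sup>2)"
    and h': "h' \<in> borel_measurable lborel" "integrable lborel (\<lambda>x. (h' x)\<^sup>2)"
    using assms(3,6) by (auto simp: H1_weak_deriv_def)
  have sq: "AE x in lborel. (h x)\<^sup>2 = (H x)\<^sup>2"
    using ae by eventually_elim simp
  have "integrable lborel (\<lambda>x. (H x)\<^sup>2)"
    by (intro integrable_cong_AE_imp[OF h2 _ sq]) measurable
  then have "(\<integral>x. exp (- c * \<bar>x\<bar>) * (H x)\<^sup>2 \<partial>lborel)
      \<le> 4 / (c * (\<integral>x. Y x \<partial>lborel)) * (\<integral>x. Y x * (H x)\<^sup>2 \<partial>lborel)
        + 64 / (c\<^sup>2 * (\<integral>x. Y x \<partial>lborel)\<^sup>2) * (\<integral>x. (h' x)\<^sup>2 \<partial>lborel)"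
    using assms(1-5) h' incr by (intro exp_weighted_square_le) auto
  moreover have "AE x in lborel. exp (- c * \<bar>x\<bar>) * (h x)\<^sup>2 = exp (- c * \<bar>x\<bar>) * (H x)\<^sup>2"
    and "AE x in lborel. Y x * (h x)\<^sup>2 = Y x * (H x)\<^sup>2"
    using sq by (auto elim: eventually_mono)
  then have "(\<integral>x. exp (- c * \<bar>x\<bar>) * (h x)\<^sup>2 \<partial>lborel) = (\<integral>x. exp (- c * \<bar>x\<bar>) * (H x)\<^sup>2 \<partial>lborel)"
    and "(\<integral>x. Y x * (h x)\<^sup>2 \<partial>lborel) = (\<integral>x. Y x * (H x)\<^sup>2 \<partial>lborel)"
    by (intro integral_cong_AE; measurable)+
  ultimately show ?thesis by simp
qed

end
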